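(* Let $\rho_{ABC}$ be a state on $H_A\otimes H_B\otimes H_C$ with $\dim H_X=d_X$, and for $X\in\{A,B,C\}$ let $\{E^X_{\alpha,k}\}$ be an informationally complete $(N_X,M_X)$ POVM on $H_X$ with parameter $x_X$. Write $K_X=\frac{(d_X-1)(d_X^2+M_X^2x_X)}{d_XM_X(M_X-1)}$. Let $\mu,\nu\in\mathbb{R}$ and $l$ a positive integer. If $\rho_{ABC}=\sum_ip_i\rho^A_i\otimes\rho^B_i\otimes\rho^C_i$ is fully separable, then simultaneously $$\|\mathscr{M}^l_{\mu,\nu}(\rho_{A|BC})\|_{\mathrm{tr}}\le\sqrt{(l\mu^2+K_A)(l\nu^2+K_BK_C)},$$ $$\|\mathscr{M}^l_{\mu,\nu}(\rho_{B|AC})\|_{\mathrm{tr}}\le\sqrt{(l\mu^2+K_B)(l\nu^2+K_AK_C)},$$ $$\|\mathscr{M}^l_{\mu,\nu}(\rho_{C|AB})\|_{\mathrm{tr}}\le\sqrt{(l\mu^2+K_C)(l\nu^2+K_AK_B)}.$$ Consequently, if $\rho_{ABC}$ violates any one of these inequalities, it is not fully separable.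
   Context: An $(N,M)$ POVM on $\mathbb{C}^d$ ($M\ge2$) consists of $N$ POVMs $\{E_{\alpha,k}\mid k=1,\dots,M\}$ satisfying $\mathrm{tr}(E_{\alpha,k})=d/M$, $\mathrm{tr}(E_{\alpha,k}^2)=x$, $\mathrm{tr}(E_{\alpha,k}E_{\alpha,l})=\frac{d-Mx}{M(M-1)}$ ($l\ne k$), $\mathrm{tr}(E_{\alpha,k}E_{\beta,l})=d/M^2$ ($\beta\ne\alpha$), where $\frac{d}{M^2}<x\le\min\{\frac{d^2}{M^2},\frac dM\}$; informationally complete means $N(M-1)=d^2-1$. Fully separable: a convex combination ($p_i\ge0$, $\sum p_i=1$) of tensor products of local density matrices. For the bipartition $X|YZ$ (where $\{X,Y,Z\}=\{A,B,C\}$): let $\rho_X$ and $\rho_{YZ}$ be the reduced states; $\tau_X$ is the column vector with entries $\mathrm{tr}(E^X_{\alpha,k}\rho_X)$; $\sigma_{YZ}$ is the column vector with entries $\mathrm{tr}[(E^Y_{\beta,j}\otimes E^Z_{\gamma,n})\rho_{YZ}]$ indexed by $(\beta,j,\gamma,n)$; $\mathcal{P}(\rho_{X|YZ})$ is the matrix with entries $\mathrm{tr}[(E^X_{\alpha,k}\otimes E^Y_{\beta,j}\otimes E^Z_{\gamma,n})\rho_{ABC}]$ (tensor factors placed in the order of the actual subsystems) with row index $(\alpha,k)$ and column index $(\beta,j,\gamma,n)$, all indices in lexicographic order. Then $$\mathscr{M}^l_{\mu,\nu}(\rho_{X|YZ})=\begin{pmatrix}\mu\nu J_{l\times l}&\mu\,\omega_l(\sigma_{YZ})^T\\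 \nu\,\omega_l(\tau_X)&\mathcal{P}(\rho_{X|YZ})\end{pmatrix},$$ where $J_{l\times l}$ is the $l\times l$ all-ones matrix and $\omega_l(V)=(V,\dots,V)$ is the matrix with $l$ columns equal to the column vector $V$. $\|G\|_{\mathrm{tr}}=\mathrm{tr}\sqrt{G^\dagger G}$. *)

theory Defs
  imports "Jordan_Normal_Form.Schur_Decomposition"
begin

definition trace_mat :: "complex mat \<Rightarrow> complex" where
  "trace_mat A = (\<Sum>i<dim_row A. A $$ (i, i))"

definition hermitian_mat :: "complex mat \<Rightarrow> bool" where
  "hermitian_mat A \<longleftrightarrow> mat_adjoint A = A"

text \<open>Positive semidefinite n x n matrix (complex order: 0 \<le> z iff z real and nonnegative).\<close>
definition psd_mat :: "nat \<Rightarrow> complex mat \<Rightarrow> bool" where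
  "psd_mat n A \<longleftrightarrow> A \<in> carrier_mat n n \<and> hermitian_mat A \<and>
     (\<forall>v \<in> carrier_vec n. 0 \<le> conjugate v \<bullet> (A *\<^sub>v v))"

definition density_mat :: "nat \<Rightarrow> complex mat \<Rightarrow> bool" where
  "density_mat d \<rho> \<longleftrightarrow> psd_mat d \<rho> \<and> trace_mat \<rho> = 1"

definition psd_sqrt :: "complex mat \<Rightarrow> complex mat" where
  "psd_sqrt A = (THE S. psd_mat (dim_row A) S \<and> S * S = A)"

definition trace_norm :: "complex mat \<Rightarrow> real" where
  "trace_norm G = Re (trace_mat (psd_sqrt (mat_adjoint G * G)))"

text \<open>Kronecker (tensor) product; index i of A\<otimes>B corresponds to pair (i div rows B, i mod rows B).\<close>
definition kron :: "complex mat \<Rightarrow> complex mat \<Rightarrow> complex mat" where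
  "kron A B = mat (dim_row A * dim_row B) (dim_col A * dim_col B)
     (\<lambda>(i, j). A $$ (i div dim_row B, j div dim_col B) * B $$ (i mod dim_row B, j mod dim_col B))"

text \<open>Partial trace over the middle factor of C^d1 \<otimes> C^d2 \<otimes> C^d3.\<close>
definition ptrace_mid :: "nat \<Rightarrow> nat \<Rightarrow> nat \<Rightarrow> complex mat \<Rightarrow> complex mat" where
  "ptrace_mid d1 d2 d3 \<rho> = mat (d1 * d3) (d1 * d3)
     (\<lambda>(i, j). \<Sum>k<d2. \<rho> $$ (((i div d3) * d2 + k) * d3 + i mod d3,
                                ((j div d3) * d2 + k) * d3 + j mod d3))"

definition ptrace_first :: "nat \<Rightarrow> nat \<Rightarrow> complex mat \<Rightarrow> complex mat" where
  "ptrace_first d1 d2 \<rho> = ptrace_mid 1 d1 d2 \<rho>"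

definition ptrace_second :: "nat \<Rightarrow> nat \<Rightarrow> complex mat \<Rightarrow> complex mat" where
  "ptrace_second d1 d2 \<rho> = ptrace_mid d1 d2 1 \<rho>"

text \<open>E \<alpha> k for \<alpha> < N, k < M (0-based indices) is an (N,M) POVM on C^d with parameter x.\<close>
definition NM_POVM :: "nat \<Rightarrow> nat \<Rightarrow> nat \<Rightarrow> real \<Rightarrow> (nat \<Rightarrow> nat \<Rightarrow> complex mat) \<Rightarrow> bool" where
  "NM_POVM d N M x E \<longleftrightarrow>
     M \<ge> 2 \<and>
     real d / real M ^ 2 < x \<and> x \<le> min (real d ^ 2 / real M ^ 2) (real d / real M) \<and>
     (\<forall>\<alpha><N. \<forall>k<M. psd_mat d (E \<alpha> k)) \<and>
     (\<forall>\<alpha><N. \<forall>i<d. \<forall>j<d. (\<Sum>k<M. E \<alpha> k $$ (i, j)) = 1\<^sub>m d $$ (i, j)) \<and>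
     (\<forall>\<alpha><N. \<forall>k<M. trace_mat (E \<alpha> k) = of_real (real d / real M)) \<and>
     (\<forall>\<alpha><N. \<forall>k<M. trace_mat (E \<alpha> k * E \<alpha> k) = of_real x) \<and>
     (\<forall>\<alpha><N. \<forall>k<M. \<forall>l<M. l \<noteq> k \<longrightarrow>
        trace_mat (E \<alpha> k * E \<alpha> l) = of_real ((real d - real M * x) / (real M * (real M - 1)))) \<and>
     (\<forall>\<alpha><N. \<forall>\<beta><N. \<forall>k<M. \<forall>l<M. \<beta> \<noteq> \<alpha> \<longrightarrow>
        trace_mat (E \<alpha> k * E \<beta> l) = of_real (real d / real M ^ 2))"

definition IC_NM_POVM :: "nat \<Rightarrow> nat \<Rightarrow> nat \<Rightarrow> real \<Rightarrow> (nat \<Rightarrow> nat \<Rightarrow> complex mat) \<Rightarrow> bool" where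
  "IC_NM_POVM d N M x E \<longleftrightarrow> NM_POVM d N M x E \<and> N * (M - 1) = d ^ 2 - 1"

definition K_const :: "nat \<Rightarrow> nat \<Rightarrow> real \<Rightarrow> real" where
  "K_const d M x = (real d - 1) * (real d ^ 2 + real M ^ 2 * x) / (real d * real M * (real M - 1))"

definition fully_separable :: "nat \<Rightarrow> nat \<Rightarrow> nat \<Rightarrow> complex mat \<Rightarrow> bool" where
  "fully_separable dA dB dC \<rho> \<longleftrightarrow>
     (\<exists>(n::nat) (p::nat \<Rightarrow> real) \<rho>A \<rho>B \<rho>C.
        (\<forall>i<n. 0 \<le> p i) \<and> (\<Sum>i<n. p i) = 1 \<and>
        (\<forall>i<n. density_mat dA (\<rho>A i) \<and> density_mat dB (\<rho>B i) \<and> density_mat dC (\<rho>C i)) \<and>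
        \<rho> \<in> carrier_mat (dA * dB * dC) (dA * dB * dC) \<and>
        (\<forall>r < dA * dB * dC. \<forall>c < dA * dB * dC.
           \<rho> $$ (r, c) = (\<Sum>i<n. complex_of_real (p i) * kron (kron (\<rho>A i) (\<rho>B i)) (\<rho>C i) $$ (r, c))))"

text \<open>tau_X: entries tr(E_{\<alpha>,k} \<rho>_X), row index (\<alpha>,k) lexicographic.\<close>
definition tau_vec :: "nat \<Rightarrow> nat \<Rightarrow> (nat \<Rightarrow> nat \<Rightarrow> complex mat) \<Rightarrow> complex mat \<Rightarrow> complex vec" where
  "tau_vec N M E \<rho>X = vec (N * M) (\<lambda>r. trace_mat (E (r div M) (r mod M) * \<rho>X))"

text \<open>sigma_YZ: entries tr((E^Y_{\<beta>,j} \<otimes> E^Z_{\<gamma>,n}) \<rho>_YZ), index (\<beta>,j,\<gamma>,n) lexicographic.\<close>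
definition sigma_vec :: "nat \<Rightarrow> nat \<Rightarrow> (nat \<Rightarrow> nat \<Rightarrow> complex mat) \<Rightarrow>
    nat \<Rightarrow> nat \<Rightarrow> (nat \<Rightarrow> nat \<Rightarrow> complex mat) \<Rightarrow> complex mat \<Rightarrow> complex vec" where
  "sigma_vec N1 M1 E1 N2 M2 E2 \<rho>12 = vec (N1 * M1 * N2 * M2) (\<lambda>c.
     let \<beta> = c div (M1 * N2 * M2); j = (c div (N2 * M2)) mod M1;
         \<gamma> = (c div M2) mod N2; n = c mod M2
     in trace_mat (kron (E1 \<beta> j) (E2 \<gamma> n) * \<rho>12))"

definition prob3 :: "(nat \<Rightarrow> nat \<Rightarrow> complex mat) \<Rightarrow> (nat \<Rightarrow> nat \<Rightarrow> complex mat) \<Rightarrow>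
    (nat \<Rightarrow> nat \<Rightarrow> complex mat) \<Rightarrow> complex mat \<Rightarrow> nat \<Rightarrow> nat \<Rightarrow> nat \<Rightarrow> nat \<Rightarrow> nat \<Rightarrow> nat \<Rightarrow> complex" where
  "prob3 EA EB EC \<rho> \<alpha> k \<beta> j \<gamma> n = trace_mat (kron (kron (EA \<alpha> k) (EB \<beta> j)) (EC \<gamma> n) * \<rho>)"

text \<open>Generic correlation matrix: entry f (\<alpha>,k) (\<beta>,j,\<gamma>,n) with rows (\<alpha>,k), columns (\<beta>,j,\<gamma>,n).\<close>
definition corr_mat :: "nat \<Rightarrow> nat \<Rightarrow> nat \<Rightarrow> nat \<Rightarrow> nat \<Rightarrow> nat \<Rightarrow>
    (nat \<Rightarrow> nat \<Rightarrow> nat \<Rightarrow> nat \<Rightarrow> nat \<Rightarrow> nat \<Rightarrow> complex) \<Rightarrow> complex mat" where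
  "corr_mat NX MX NY MY NZ MZ f = mat (NX * MX) (NY * MY * NZ * MZ) (\<lambda>(r, c).
     f (r div MX) (r mod MX)
       (c div (MY * NZ * MZ)) ((c div (NZ * MZ)) mod MY) ((c div MZ) mod NZ) (c mod MZ))"

definition P_A_BC where
  "P_A_BC NA MA EA NB MB EB NC MC EC \<rho> =
     corr_mat NA MA NB MB NC MC (\<lambda>\<alpha> k \<beta> j \<gamma> n. prob3 EA EB EC \<rho> \<alpha> k \<beta> j \<gamma> n)"

definition P_B_AC where
  "P_B_AC NA MA EA NB MB EB NC MC EC \<rho> =
     corr_mat NB MB NA MA NC MC (\<lambda>\<beta> j \<alpha> k \<gamma> n. prob3 EA EB EC \<rho> \<alpha> k \<beta> j \<gamma> n)"

definition P_C_AB where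
  "P_C_AB NA MA EA NB MB EB NC MC EC \<rho> =
     corr_mat NC MC NA MA NB MB (\<lambda>\<gamma> n \<alpha> k \<beta> j. prob3 EA EB EC \<rho> \<alpha> k \<beta> j \<gamma> n)"

definition omega :: "nat \<Rightarrow> complex vec \<Rightarrow> complex mat" where
  "omega l V = mat (dim_vec V) l (\<lambda>(i, j). V $ i)"

definition ones_mat :: "nat \<Rightarrow> complex mat" where
  "ones_mat l = mat l l (\<lambda>_. 1)"

definition script_M :: "nat \<Rightarrow> real \<Rightarrow> real \<Rightarrow> complex vec \<Rightarrow> complex vec \<Rightarrow> complex mat \<Rightarrow> complex mat" where
  "script_M l \<mu> \<nu> \<tau> \<sigma> P = four_block_mat
     (complex_of_real (\<mu> * \<nu>) \<cdot>\<^sub>m ones_mat l)  (complex_of_real \<mu> \<cdot>\<^sub>m transpose_mat (omega l \<sigma>))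
     (complex_of_real \<nu> \<cdot>\<^sub>m omega l \<tau>)           P"

end

(* For a product state the matrix M^l_{mu,nu}(rho_{X|YZ}) is the rank-one matrix a b^T with
   a = (mu, ..., mu, tau_X) and b = (nu, ..., nu, sigma_YZ), where sigma_YZ is the Kronecker product
   of the probability vectors of Y and Z.  For a fully separable state it is therefore a convex
   combination of rank-one matrices a_t b_t^T, whose trace norm is at most the corresponding
   combination of |a_t| |b_t| (singular value decomposition and Bessel's inequality).  The lengths are
   controlled by the inequality  sum (tr (E_{alpha,k} rho))^2 <= K  for an informationally complete
   (N,M)-POVM, which is Cauchy-Schwarz for the Hilbert-Schmidt product of
   sum (p_{alpha,k} - 1/M) E_{alpha,k} and rho - 1/d; it gives |a_t|^2 <= l mu^2 + K_X and
   |b_t|^2 <= l nu^2 + K_Y K_Z. *)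

theory Submission
  imports Defs "HOL-Analysis.L2_Norm" "Jordan_Normal_Form.Spectral_Radius"
begin

section \<open>Complex matrices\<close>

lemma mat_adjoint_dim [simp]:
  "dim_row (mat_adjoint A) = dim_col A" "dim_col (mat_adjoint A) = dim_row A"
  unfolding mat_adjoint_def mat_of_rows_def by simp_all

lemma index_mat_adjoint [simp]:
  "i < dim_col A \<Longrightarrow> j < dim_row A \<Longrightarrow> mat_adjoint A $$ (i, j) = cnj (A $$ (j, i))"
  unfolding mat_adjoint_def mat_of_rows_def by simp

lemma mat_adjoint_carrier [simp]: "A \<in> carrier_mat m n \<Longrightarrow> mat_adjoint A \<in> carrier_mat n m"
  unfolding carrier_mat_def by simp

lemma mat_adjoint_adjoint [simp]: "mat_adjoint (mat_adjoint (A :: complex mat)) = A"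
  by (rule eq_matI) simp_all

lemma dim_mat_diag [simp]: "dim_row (mat_diag n f) = n" "dim_col (mat_diag n f) = n"
  unfolding mat_diag_def by simp_all

lemma one_smult_mat [simp]: "(1 :: complex) \<cdot>\<^sub>m A = A"
  by (rule eq_matI) simp_all

lemma index_mult_mat_sum:
  assumes "A \<in> carrier_mat m k" "B \<in> carrier_mat k n" "i < m" "j < n"
  shows "(A * B) $$ (i, j) = (\<Sum>l<k. A $$ (i, l) * B $$ (l, j))"
  using assms by (auto simp: scalar_prod_def lessThan_atLeast0 intro!: sum.cong)

lemma index_mult_mat_vec_sum:
  assumes "A \<in> carrier_mat m k" "v \<in> carrier_vec k" "i < m"
  shows "(A *\<^sub>v v) $ i = (\<Sum>l<k. A $$ (i, l) * v $ l)"
  using assms by (auto simp: scalar_prod_def lessThan_atLeast0 intro!: sum.cong)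

lemma cscalar_prod_sum:
  assumes "w \<in> carrier_vec n"
  shows "v \<bullet>c w = (\<Sum>i<n. v $ i * cnj (w $ i))"
  using assms by (auto simp: scalar_prod_def lessThan_atLeast0 intro!: sum.cong)

lemma mat_adjoint_mult:
  fixes A B :: "complex mat"
  assumes A: "A \<in> carrier_mat m k" and B: "B \<in> carrier_mat k n"
  shows "mat_adjoint (A * B) = mat_adjoint B * mat_adjoint A"
proof (rule eq_matI)
  fix i j assume "i < dim_row (mat_adjoint B * mat_adjoint A)" "j < dim_col (mat_adjoint B * mat_adjoint A)"
  with A B have i: "i < n" and j: "j < m" by auto
  have "mat_adjoint (A * B) $$ (i, j) = (\<Sum>l<k. cnj (A $$ (j, l) * B $$ (l, i)))"
    using A B i j by (simp add: index_mult_mat_sum[OF A B j i])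
  also have "\<dots> = (mat_adjoint B * mat_adjoint A) $$ (i, j)"
    using A B i j
    by (auto simp: index_mult_mat_sum[OF mat_adjoint_carrier[OF B] mat_adjoint_carrier[OF A] i j]
        mult.commute intro!: sum.cong)
  finally show "mat_adjoint (A * B) $$ (i, j) = (mat_adjoint B * mat_adjoint A) $$ (i, j)" .
qed (use A B in auto)

lemma mat_adjoint_mat_diag_real [simp]:
  "mat_adjoint (mat_diag n (\<lambda>i. complex_of_real (f i))) = mat_diag n (\<lambda>i. complex_of_real (f i))"
  by (rule eq_matI) (auto simp: mat_diag_def)

lemma hermitian_mat_index_swap:
  assumes "hermitian_mat A" "A \<in> carrier_mat n n" "i < n" "j < n"
  shows "A $$ (j, i) = cnj (A $$ (i, j))"
  using assms index_mat_adjoint[of j A i] unfolding hermitian_mat_def by simp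

lemma hermitian_mat_cnj_index:
  assumes "hermitian_mat A" "A \<in> carrier_mat n n" "i < n" "j < n"
  shows "cnj (A $$ (i, j)) = A $$ (j, i)"
  using hermitian_mat_index_swap[OF assms] by simp

lemma hermitian_matI:
  assumes "A \<in> carrier_mat n n" and "\<And>i j. i < n \<Longrightarrow> j < n \<Longrightarrow> A $$ (j, i) = cnj (A $$ (i, j))"
  shows "hermitian_mat A"
  unfolding hermitian_mat_def
proof (rule eq_matI)
  fix i j assume "i < dim_row A" "j < dim_col A"
  then show "mat_adjoint A $$ (i, j) = A $$ (i, j)"
    using assms(1) assms(2)[of j i] by simp
qed (use assms(1) in auto)

lemma hermitian_mat_adjoint_mult_self:
  assumes "X \<in> carrier_mat m n"
  shows "hermitian_mat (mat_adjoint X * X)"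
  unfolding hermitian_mat_def using mat_adjoint_mult[OF mat_adjoint_carrier[OF assms] assms] by simp

lemma trace_mult_sum:
  assumes "A \<in> carrier_mat n k" "B \<in> carrier_mat k n"
  shows "trace_mat (A * B) = (\<Sum>i<n. \<Sum>j<k. A $$ (i, j) * B $$ (j, i))"
proof -
  have "dim_row (A * B) = n" using assms by simp
  then show ?thesis
    unfolding trace_mat_def using index_mult_mat_sum[OF assms] by (intro sum.cong) auto
qed

lemma trace_mult_comm:
  assumes "A \<in> carrier_mat n k" "B \<in> carrier_mat k n"
  shows "trace_mat (A * B) = trace_mat (B * A)"
  unfolding trace_mult_sum[OF assms] trace_mult_sum[OF assms(2,1)]
  by (subst sum.swap) (simp add: mult.commute)

lemma trace_mult_minus_scalar_one:
  assumes A: "A \<in> carrier_mat n n" and B: "B \<in> carrier_mat n n"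
  shows "trace_mat (A * (B - c \<cdot>\<^sub>m 1\<^sub>m n)) = trace_mat (A * B) - c * trace_mat A"
proof -
  have "trace_mat (A * (B - c \<cdot>\<^sub>m 1\<^sub>m n)) = (\<Sum>i<n. \<Sum>j<n. A $$ (i, j) * B $$ (j, i) - (if j = i then c * A $$ (i, i) else 0))"
    unfolding trace_mult_sum[OF A minus_carrier_mat[OF smult_carrier_mat[OF one_carrier_mat]]]
    using B by (auto simp: algebra_simps intro!: sum.cong)
  also have "\<dots> = trace_mat (A * B) - c * trace_mat A"
    unfolding sum_subtractf trace_mult_sum[OF A B] using A by (simp add: trace_mat_def sum_distrib_left)
  finally show ?thesis .
qed

lemma trace_minus_scalar_one_square:
  assumes B: "B \<in> carrier_mat n n"
  shows "trace_mat ((B - c \<cdot>\<^sub>m 1\<^sub>m n) * (B - c \<cdot>\<^sub>m 1\<^sub>m n))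
    = trace_mat (B * B) - 2 * c * trace_mat B + c * c * of_nat n"
proof -
  have X: "B - c \<cdot>\<^sub>m 1\<^sub>m n \<in> carrier_mat n n"
    by (rule minus_carrier_mat[OF smult_carrier_mat[OF one_carrier_mat]])
  have tX: "trace_mat (B - c \<cdot>\<^sub>m 1\<^sub>m n) = trace_mat B - c * of_nat n"
    using trace_mult_minus_scalar_one[OF one_carrier_mat B, of c] B by (simp add: trace_mat_def)
  have tXB: "trace_mat ((B - c \<cdot>\<^sub>m 1\<^sub>m n) * B) = trace_mat (B * B) - c * trace_mat B"
    unfolding trace_mult_comm[OF X B] by (rule trace_mult_minus_scalar_one[OF B B])
  show ?thesis
    unfolding trace_mult_minus_scalar_one[OF X B] tX tXB by (simp add: algebra_simps)
qed

lemma density_mat_carrier: "density_mat d R \<Longrightarrow> R \<in> carrier_mat d d"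
  unfolding density_mat_def psd_mat_def by simp

lemma density_mat_trace: "density_mat d R \<Longrightarrow> trace_mat R = 1"
  unfolding density_mat_def by simp

lemma density_mat_dim_pos:
  assumes "density_mat d R"
  shows "0 < d"
proof (rule ccontr)
  assume "\<not> 0 < d"
  then have "trace_mat R = 0" using density_mat_carrier[OF assms] by (simp add: trace_mat_def)
  then show False using density_mat_trace[OF assms] by simp
qed

definition unitary_mat :: "nat \<Rightarrow> complex mat \<Rightarrow> bool" where
  "unitary_mat n U \<longleftrightarrow> U \<in> carrier_mat n n \<and> mat_adjoint U * U = 1\<^sub>m n"

lemma unitary_mat_carrier: "unitary_mat n U \<Longrightarrow> U \<in> carrier_mat n n"
  unfolding unitary_mat_def by simp

lemma unitary_mat_adjoint_mult: "unitary_mat n U \<Longrightarrow> mat_adjoint U * U = 1\<^sub>m n"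
  unfolding unitary_mat_def by simp

lemma unitary_mat_mult_adjoint: "unitary_mat n U \<Longrightarrow> U * mat_adjoint U = 1\<^sub>m n"
  unfolding unitary_mat_def using mat_mult_left_right_inverse mat_adjoint_carrier by blast

lemma unitary_mat_mult:
  assumes U: "unitary_mat n U" and V: "unitary_mat n V"
  shows "unitary_mat n (U * V)"
proof -
  have Uc: "U \<in> carrier_mat n n" and Vc: "V \<in> carrier_mat n n"
    using U V by (simp_all add: unitary_mat_carrier)
  have "mat_adjoint (U * V) * (U * V) = mat_adjoint V * ((mat_adjoint U * U) * V)"
    using Uc Vc by (simp add: mat_adjoint_mult assoc_mult_mat[of _ n n _ n _ n])
  also have "\<dots> = 1\<^sub>m n"
    using Vc by (simp add: unitary_mat_adjoint_mult[OF U] unitary_mat_adjoint_mult[OF V])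
  finally show ?thesis using Uc Vc unfolding unitary_mat_def by simp
qed

lemma unitary_cancel_left:
  assumes U: "unitary_mat n U" and B: "B \<in> carrier_mat n k"
  shows "mat_adjoint U * (U * B) = B"
proof -
  have Uc: "U \<in> carrier_mat n n" using U by (rule unitary_mat_carrier)
  have "mat_adjoint U * (U * B) = (mat_adjoint U * U) * B"
    using Uc B by (intro assoc_mult_mat[symmetric]) auto
  then show ?thesis using B by (simp add: unitary_mat_adjoint_mult[OF U])
qed

lemma unitary_conj_mult:
  assumes U: "unitary_mat n U" and D: "D \<in> carrier_mat n n" and E: "E \<in> carrier_mat n n"
  shows "(U * D * mat_adjoint U) * (U * E * mat_adjoint U) = U * (D * E) * mat_adjoint U"
proof -
  have Uc: "U \<in> carrier_mat n n" and Ua: "mat_adjoint U \<in> carrier_mat n n"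
    using U by (simp_all add: unitary_mat_carrier)
  have UD: "U * D \<in> carrier_mat n n" and EU: "E * mat_adjoint U \<in> carrier_mat n n"
    using Uc Ua D E by auto
  have "(U * D * mat_adjoint U) * (U * E * mat_adjoint U) = (U * D) * (mat_adjoint U * (U * (E * mat_adjoint U)))"
    using Uc EU by (simp only: assoc_mult_mat[OF Uc E Ua] assoc_mult_mat[OF UD Ua mult_carrier_mat])
  also have "\<dots> = (U * D) * (E * mat_adjoint U)" by (simp only: unitary_cancel_left[OF U EU])
  also have "\<dots> = U * (D * E) * mat_adjoint U"
    using assoc_mult_mat[OF UD E Ua] assoc_mult_mat[OF Uc D E] by simp
  finally show ?thesis .
qed

lemma trace_unitary_conj_diag:
  assumes U: "unitary_mat n U"
  shows "trace_mat (U * mat_diag n f * mat_adjoint U) = (\<Sum>j<n. f j)"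
proof -
  have Uc: "U \<in> carrier_mat n n" using U by (rule unitary_mat_carrier)
  have "trace_mat (U * mat_diag n f * mat_adjoint U) = trace_mat (mat_adjoint U * (U * mat_diag n f))"
    using Uc by (intro trace_mult_comm[of _ n n]) auto
  also have "mat_adjoint U * (U * mat_diag n f) = mat_diag n f"
    by (rule unitary_cancel_left[OF U mat_diag_dim])
  finally show ?thesis by (simp add: trace_mat_def mat_diag_def)
qed

lemma unitary_col_cscalar:
  assumes U: "unitary_mat n U" and j: "j < n"
  shows "conjugate (col U j) \<bullet> col U j = 1"
proof -
  have Uc: "U \<in> carrier_mat n n" using U by (rule unitary_mat_carrier)
  have "conjugate (col U j) \<bullet> col U j = (mat_adjoint U * U) $$ (j, j)"
    using Uc j by (auto simp: scalar_prod_def lessThan_atLeast0 index_mult_mat_sum[OF mat_adjoint_carrier[OF Uc] Uc j j]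
        simp del: index_mult_mat intro!: sum.cong)
  then show ?thesis using unitary_mat_adjoint_mult[OF U] j by simp
qed

lemma mult_col_diagonalized:
  fixes A :: "complex mat"
  assumes A: "A \<in> carrier_mat n n" and U: "U \<in> carrier_mat n n"
    and AU: "A * U = U * mat_diag n f" and j: "j < n"
  shows "A *\<^sub>v col U j = f j \<cdot>\<^sub>v col U j"
proof -
  have "A *\<^sub>v col U j = col (U * mat_diag n f) j"
    unfolding AU[symmetric] by (rule col_mult2[OF A U j, symmetric])
  also have "\<dots> = f j \<cdot>\<^sub>v col U j"
    unfolding mat_diag_mult_right[OF U] by (rule eq_vecI) (use U j in \<open>auto simp: mult.commute\<close>)
  finally show ?thesis .
qed

lemma diagonalized_eq_conj:
  assumes A: "A \<in> carrier_mat n n" and U: "unitary_mat n U" and AU: "A * U = U * D" and D: "D \<in> carrier_mat n n"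
  shows "A = U * D * mat_adjoint U"
proof -
  have Uc: "U \<in> carrier_mat n n" using U by (rule unitary_mat_carrier)
  have "A = A * (U * mat_adjoint U)" using A by (simp add: unitary_mat_mult_adjoint[OF U])
  also have "\<dots> = U * D * mat_adjoint U"
    unfolding AU[symmetric] by (rule assoc_mult_mat[OF A Uc mat_adjoint_carrier[OF Uc], symmetric])
  finally show ?thesis .
qed

section \<open>Spectral theorem for Hermitian matrices\<close>

lemma exists_unitary_first_column:
  assumes v: "v \<in> carrier_vec n" and v0: "v \<noteq> 0\<^sub>v n"
  obtains W r where "unitary_mat n W" "\<And>i. i < n \<Longrightarrow> W $$ (i, 0) = v $ i / complex_of_real r"
proof -
  interpret cof_vec_space n "TYPE(complex)" .
  define ws where "ws = gram_schmidt n (basis_completion v)"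
  from basis_completion[OF v v0] have
    b: "set (basis_completion v) \<subseteq> carrier_vec n" "distinct (basis_completion v)"
      "\<not> lin_dep (set (basis_completion v))" "length (basis_completion v) = n"
      "hd (basis_completion v) = v" by auto
  from gram_schmidt_result[OF b(1-3) ws_def]
  have ws: "set ws \<subseteq> carrier_vec n" "corthogonal ws" "length ws = n" using b(4) by auto
  have n0: "n \<noteq> 0" using v v0 by auto
  then obtain vs where bv: "basis_completion v = v # vs" using b(4,5) by (cases "basis_completion v") auto
  have ws0: "ws ! 0 = v"
    using gram_schmidt_hd[OF v, of vs] n0 ws(3) unfolding ws_def bv by (metis hd_conv_nth list.size(3))
  define nr where "nr j = sqrt (Re (ws ! j \<bullet>c ws ! j))" for j
  have wsc: "ws ! j \<in> carrier_vec n" if "j < n" for j using ws that by auto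
  have sq: "ws ! j \<bullet>c ws ! j = complex_of_real ((nr j)\<^sup>2) \<and> nr j > 0" if j: "j < n" for j
  proof -
    have ge: "0 \<le> ws ! j \<bullet>c ws ! j" by (rule conjugate_square_ge_0_vec)
    moreover have "ws ! j \<bullet>c ws ! j \<noteq> 0" using corthogonalD[OF ws(2), of j j] j ws(3) by auto
    ultimately have "Re (ws ! j \<bullet>c ws ! j) > 0" "Im (ws ! j \<bullet>c ws ! j) = 0"
      by (auto simp: less_eq_complex_def complex_eq_iff)
    then show ?thesis unfolding nr_def by (simp add: complex_eq_iff)
  qed
  define W where "W = mat n n (\<lambda>(i, j). ws ! j $ i / complex_of_real (nr j))"
  have W: "W \<in> carrier_mat n n" unfolding W_def by simp
  have "mat_adjoint W * W = 1\<^sub>m n"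
  proof (rule eq_matI)
    fix i j assume "i < dim_row (1\<^sub>m n :: complex mat)" "j < dim_col (1\<^sub>m n :: complex mat)"
    then have i: "i < n" and j: "j < n" by auto
    have "(mat_adjoint W * W) $$ (i, j) =
        (\<Sum>k<n. ws ! j $ k * cnj (ws ! i $ k)) / (complex_of_real (nr i) * complex_of_real (nr j))"
      unfolding index_mult_mat_sum[OF mat_adjoint_carrier[OF W] W i j] sum_divide_distrib
      using i j W by (intro sum.cong) (auto simp: W_def field_simps)
    also have "\<dots> = (ws ! j \<bullet>c ws ! i) / (complex_of_real (nr i) * complex_of_real (nr j))"
      using cscalar_prod_sum[OF wsc[OF i]] by simp
    also have "\<dots> = 1\<^sub>m n $$ (i, j)"
      using sq[OF i] corthogonalD[OF ws(2), of j i] i j ws(3) by (cases "i = j") (auto simp: power2_eq_square)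
    finally show "(mat_adjoint W * W) $$ (i, j) = 1\<^sub>m n $$ (i, j)" .
  qed (use W in auto)
  then show ?thesis
    using that[of W "nr 0"] W n0 ws0 unfolding unitary_mat_def by (auto simp: W_def)
qed

lemma exists_unitary_eigenvector_first_column:
  assumes A: "A \<in> carrier_mat (Suc m) (Suc m)"
  obtains W e where "unitary_mat (Suc m) W" "\<And>k. k < Suc m \<Longrightarrow> (A * W) $$ (k, 0) = e * W $$ (k, 0)"
proof -
  obtain e v where "eigenvector A v e"
    using spectrum_non_empty[OF A] find_eigenvector[OF A] unfolding spectrum_def by blast
  then have v: "v \<in> carrier_vec (Suc m)" "v \<noteq> 0\<^sub>v (Suc m)" and Av: "A *\<^sub>v v = e \<cdot>\<^sub>v v"
    using A unfolding eigenvector_def by auto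
  obtain W r where W: "unitary_mat (Suc m) W"
    and col0: "\<And>i. i < Suc m \<Longrightarrow> W $$ (i, 0) = v $ i / complex_of_real r"
    using exists_unitary_first_column[OF v] by blast
  have Wc: "W \<in> carrier_mat (Suc m) (Suc m)" using W by (rule unitary_mat_carrier)
  have "(A * W) $$ (k, 0) = e * W $$ (k, 0)" if k: "k < Suc m" for k
  proof -
    have "(A * W) $$ (k, 0) = (A *\<^sub>v v) $ k / complex_of_real r"
      unfolding index_mult_mat_sum[OF A Wc k zero_less_Suc] index_mult_mat_vec_sum[OF A v(1) k]
        sum_divide_distrib
      by (intro sum.cong) (auto simp: col0)
    then show ?thesis using Av v k col0 by simp
  qed
  then show ?thesis using that W by blast
qed

lemma hermitian_unitary_deflation:
  assumes A: "A \<in> carrier_mat (Suc m) (Suc m)" "hermitian_mat A" and W: "unitary_mat (Suc m) W"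
    and ev: "\<And>k. k < Suc m \<Longrightarrow> (A * W) $$ (k, 0) = e * W $$ (k, 0)"
  obtains B c where "B \<in> carrier_mat (Suc m) (Suc m)" "A * W = W * B"
    "hermitian_mat (mat m m (\<lambda>(i, j). B $$ (Suc i, Suc j)))"
    "\<And>i. i < Suc m \<Longrightarrow> B $$ (i, 0) = (if i = 0 then complex_of_real c else 0)"
    "\<And>j. j < Suc m \<Longrightarrow> B $$ (0, j) = (if j = 0 then complex_of_real c else 0)"
proof -
  have Wc: "W \<in> carrier_mat (Suc m) (Suc m)" using W by (rule unitary_mat_carrier)
  note Wa = mat_adjoint_carrier[OF Wc]
  have AW: "A * W \<in> carrier_mat (Suc m) (Suc m)" using A Wc by simp
  define B where "B = mat_adjoint W * (A * W)"
  have B: "B \<in> carrier_mat (Suc m) (Suc m)" unfolding B_def using Wa AW by simp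
  have "mat_adjoint B = (mat_adjoint W * mat_adjoint A) * W"
    unfolding B_def by (simp add: mat_adjoint_mult[OF Wa AW] mat_adjoint_mult[OF A(1) Wc])
  also have "\<dots> = B"
    using A(2) unfolding B_def hermitian_mat_def by (simp add: assoc_mult_mat[OF Wa A(1) Wc])
  finally have hB: "hermitian_mat B" unfolding hermitian_mat_def .
  have hC: "hermitian_mat (mat m m (\<lambda>(i, j). B $$ (Suc i, Suc j)))"
  proof (rule hermitian_matI[of _ m])
    fix i j assume "i < m" "j < m"
    then show "mat m m (\<lambda>(i, j). B $$ (Suc i, Suc j)) $$ (j, i)
        = cnj (mat m m (\<lambda>(i, j). B $$ (Suc i, Suc j)) $$ (i, j))"
      using hermitian_mat_index_swap[OF hB B, of "Suc i" "Suc j"] by simp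
  qed simp
  have "W * B = (W * mat_adjoint W) * (A * W)"
    unfolding B_def by (simp add: assoc_mult_mat[OF Wc Wa AW])
  then have AWB: "A * W = W * B" using left_mult_one_mat[OF AW] by (simp add: unitary_mat_mult_adjoint[OF W])
  have col: "B $$ (i, 0) = (if i = 0 then e else 0)" if i: "i < Suc m" for i
  proof -
    have "B $$ (i, 0) = e * (\<Sum>k<Suc m. mat_adjoint W $$ (i, k) * W $$ (k, 0))"
      unfolding B_def index_mult_mat_sum[OF Wa AW i zero_less_Suc] sum_distrib_left
      by (intro sum.cong) (auto simp: ev)
    also have "\<dots> = e * (mat_adjoint W * W) $$ (i, 0)"
      by (simp add: index_mult_mat_sum[OF Wa Wc i zero_less_Suc])
    finally show ?thesis using unitary_mat_adjoint_mult[OF W] i by simp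
  qed
  have e: "e = complex_of_real (Re e)"
    using hermitian_mat_index_swap[OF hB B, of 0 0] col[of 0] by (simp add: complex_eq_iff)
  have row: "B $$ (0, j) = (if j = 0 then e else 0)" if "j < Suc m" for j
    using hermitian_mat_index_swap[OF hB B, of j 0] col[of j] e that by auto
  show ?thesis using that[OF B AWB hC, of "Re e"] col row e by simp
qed

definition diag_block_one :: "complex mat \<Rightarrow> complex mat" where
  "diag_block_one V = mat (Suc (dim_row V)) (Suc (dim_col V))
     (\<lambda>(i, j). if i = 0 \<or> j = 0 then (if i = j then 1 else 0) else V $$ (i - 1, j - 1))"

lemma diag_block_one_carrier: "V \<in> carrier_mat m m \<Longrightarrow> diag_block_one V \<in> carrier_mat (Suc m) (Suc m)"
  unfolding diag_block_one_def by simp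

lemma unitary_mat_diag_block_one:
  assumes V: "unitary_mat m V"
  shows "unitary_mat (Suc m) (diag_block_one V)"
proof -
  have Vc: "V \<in> carrier_mat m m" using V by (rule unitary_mat_carrier)
  define V' where "V' = diag_block_one V"
  have V': "V' \<in> carrier_mat (Suc m) (Suc m)" unfolding V'_def by (rule diag_block_one_carrier[OF Vc])
  have "mat_adjoint V' * V' = 1\<^sub>m (Suc m)"
  proof (rule eq_matI)
    fix i j assume "i < dim_row (1\<^sub>m (Suc m) :: complex mat)" "j < dim_col (1\<^sub>m (Suc m) :: complex mat)"
    then have i: "i < Suc m" and j: "j < Suc m" by auto
    have "(mat_adjoint V' * V') $$ (i, j) = cnj (V' $$ (0, i)) * V' $$ (0, j)
        + (\<Sum>k<m. cnj (V' $$ (Suc k, i)) * V' $$ (Suc k, j))"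
      unfolding index_mult_mat_sum[OF mat_adjoint_carrier[OF V'] V' i j] sum.lessThan_Suc_shift
      using V' i j by simp
    also have "\<dots> = 1\<^sub>m (Suc m) $$ (i, j)"
    proof (cases i; cases j)
      fix i' j' assume ij: "i = Suc i'" "j = Suc j'"
      have "(\<Sum>k<m. cnj (V' $$ (Suc k, i)) * V' $$ (Suc k, j)) = (mat_adjoint V * V) $$ (i', j')"
        using Vc i j ij
      by (auto simp: index_mult_mat_sum[OF mat_adjoint_carrier[OF Vc] Vc] V'_def diag_block_one_def
          simp del: index_mult_mat intro!: sum.cong)
      then show ?thesis using unitary_mat_adjoint_mult[OF V] Vc i j ij by (simp add: V'_def diag_block_one_def)
    qed (use Vc i j in \<open>auto simp: V'_def diag_block_one_def\<close>)
    finally show "(mat_adjoint V' * V') $$ (i, j) = 1\<^sub>m (Suc m) $$ (i, j)" .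
  qed (use V' in auto)
  then show ?thesis using V' unfolding unitary_mat_def V'_def by simp
qed

lemma diag_block_one_diagonalizes:
  assumes B: "B \<in> carrier_mat (Suc m) (Suc m)"
    and col: "\<And>i. i < Suc m \<Longrightarrow> B $$ (i, 0) = (if i = 0 then c else 0)"
    and row: "\<And>j. j < Suc m \<Longrightarrow> B $$ (0, j) = (if j = 0 then c else 0)"
    and V: "V \<in> carrier_mat m m"
    and CV: "mat m m (\<lambda>(i, j). B $$ (Suc i, Suc j)) * V = V * mat_diag m f"
  shows "B * diag_block_one V = diag_block_one V * mat_diag (Suc m) (\<lambda>i. if i = 0 then c else f (i - 1))"
proof (rule eq_matI)
  define C where "C = mat m m (\<lambda>(i, j). B $$ (Suc i, Suc j))"
  have C: "C \<in> carrier_mat m m" unfolding C_def by simp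
  define V' where "V' = diag_block_one V"
  have V': "V' \<in> carrier_mat (Suc m) (Suc m)" unfolding V'_def by (rule diag_block_one_carrier[OF V])
  fix i j assume "i < dim_row (V' * mat_diag (Suc m) (\<lambda>i. if i = 0 then c else f (i - 1)))"
    "j < dim_col (V' * mat_diag (Suc m) (\<lambda>i. if i = 0 then c else f (i - 1)))"
  then have i: "i < Suc m" and j: "j < Suc m" using V' by (auto simp: V'_def)
  have "(B * V') $$ (i, j) = B $$ (i, 0) * V' $$ (0, j) + (\<Sum>k<m. B $$ (i, Suc k) * V' $$ (Suc k, j))"
    unfolding index_mult_mat_sum[OF B V' i j] by (rule sum.lessThan_Suc_shift)
  also have "\<dots> = V' $$ (i, j) * (if j = 0 then c else f (j - 1))"
  proof (cases i; cases j)
    fix i' j' assume ij: "i = Suc i'" "j = Suc j'"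
    have i': "i' < m" and j': "j' < m" using i j ij by auto
    have "(\<Sum>k<m. B $$ (i, Suc k) * V' $$ (Suc k, j)) = (C * V) $$ (i', j')"
      unfolding index_mult_mat_sum[OF C V i' j'] using V i' j' ij
      by (auto simp: C_def V'_def diag_block_one_def intro!: sum.cong)
    also have "\<dots> = V $$ (i', j') * f j'"
      unfolding C_def CV using V i j ij by (simp add: mat_diag_mult_right[OF V])
    finally show ?thesis using V i j ij col by (simp add: V'_def diag_block_one_def)
  qed (use V i j col row in \<open>auto simp: V'_def diag_block_one_def\<close>)
  also have "\<dots> = (V' * mat_diag (Suc m) (\<lambda>i. if i = 0 then c else f (i - 1))) $$ (i, j)"
    using i j by (simp add: mat_diag_mult_right[OF V'])
  finally show "(B * diag_block_one V) $$ (i, j) =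
      (diag_block_one V * mat_diag (Suc m) (\<lambda>i. if i = 0 then c else f (i - 1))) $$ (i, j)"
    unfolding V'_def .
qed (use B V in \<open>auto simp: diag_block_one_def\<close>)

lemma hermitian_unitarily_diagonalizable:
  assumes "A \<in> carrier_mat n n" "hermitian_mat A"
  shows "\<exists>U lam. unitary_mat n U \<and> A * U = U * mat_diag n (\<lambda>i. complex_of_real (lam i))"
  using assms
proof (induction n arbitrary: A)
  case 0
  then show ?case
    by (intro exI[of _ "1\<^sub>m 0"] exI[of _ "\<lambda>_. 0"]) (auto simp: unitary_mat_def)
next
  case (Suc m A)
  obtain W e where W: "unitary_mat (Suc m) W" and ev: "\<And>k. k < Suc m \<Longrightarrow> (A * W) $$ (k, 0) = e * W $$ (k, 0)"
    using exists_unitary_eigenvector_first_column[OF Suc.prems(1)] by blast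
  have Wc: "W \<in> carrier_mat (Suc m) (Suc m)" using W by (rule unitary_mat_carrier)
  obtain B c where B: "B \<in> carrier_mat (Suc m) (Suc m)" "A * W = W * B"
    "hermitian_mat (mat m m (\<lambda>(i, j). B $$ (Suc i, Suc j)))"
    "\<And>i. i < Suc m \<Longrightarrow> B $$ (i, 0) = (if i = 0 then complex_of_real c else 0)"
    "\<And>j. j < Suc m \<Longrightarrow> B $$ (0, j) = (if j = 0 then complex_of_real c else 0)"
    using hermitian_unitary_deflation[OF Suc.prems W ev] by blast
  obtain V \<mu> where V: "unitary_mat m V"
    and CV: "mat m m (\<lambda>(i, j). B $$ (Suc i, Suc j)) * V = V * mat_diag m (\<lambda>i. complex_of_real (\<mu> i))"
    using Suc.IH[OF _ B(3)] by auto
  define lam where "lam i = (if i = 0 then c else \<mu> (i - 1))" for i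
  have BV: "B * diag_block_one V = diag_block_one V * mat_diag (Suc m) (\<lambda>i. complex_of_real (lam i))"
    using diag_block_one_diagonalizes[OF B(1) B(4,5) unitary_mat_carrier[OF V] CV]
    unfolding lam_def by (simp add: if_distrib cong: if_cong)
  define U where "U = W * diag_block_one V"
  have V': "diag_block_one V \<in> carrier_mat (Suc m) (Suc m)"
    by (rule diag_block_one_carrier[OF unitary_mat_carrier[OF V]])
  have "A * U = (A * W) * diag_block_one V"
    unfolding U_def by (rule assoc_mult_mat[OF Suc.prems(1) Wc V', symmetric])
  also have "\<dots> = W * (diag_block_one V * mat_diag (Suc m) (\<lambda>i. complex_of_real (lam i)))"
    unfolding BV[symmetric] B(2) by (rule assoc_mult_mat[OF Wc B(1) V'])
  also have "\<dots> = U * mat_diag (Suc m) (\<lambda>i. complex_of_real (lam i))"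
    unfolding U_def by (rule assoc_mult_mat[OF Wc V' mat_diag_dim, symmetric])
  finally show ?case
    using unitary_mat_mult[OF W unitary_mat_diag_block_one[OF V]] unfolding U_def by blast
qed

section \<open>Positive semidefinite square roots and the trace norm\<close>

lemma mat_adjoint_vec_swap:
  fixes X :: "complex mat"
  assumes X: "X \<in> carrier_mat m n" and v: "v \<in> carrier_vec n" and w: "w \<in> carrier_vec m"
  shows "conjugate v \<bullet> (mat_adjoint X *\<^sub>v w) = conjugate (X *\<^sub>v v) \<bullet> w"
proof -
  have "conjugate v \<bullet> (mat_adjoint X *\<^sub>v w) = (\<Sum>i<n. \<Sum>l<m. cnj (v $ i) * cnj (X $$ (l, i)) * w $ l)"
    using X v w by (auto simp: scalar_prod_def lessThan_atLeast0 sum_distrib_left mult.assoc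
        index_mult_mat_vec_sum[OF mat_adjoint_carrier[OF X] w] simp del: index_mult_mat_vec intro!: sum.cong)
  also have "\<dots> = (\<Sum>l<m. \<Sum>i<n. cnj (X $$ (l, i) * v $ i) * w $ l)"
    by (subst sum.swap) (auto simp: mult.commute intro!: sum.cong)
  also have "\<dots> = conjugate (X *\<^sub>v v) \<bullet> w"
    using X v w by (auto simp: scalar_prod_def lessThan_atLeast0 index_mult_mat_vec_sum[OF X v] sum_distrib_right
        simp del: index_mult_mat_vec intro!: sum.cong)
  finally show ?thesis .
qed

lemma hermitian_mat_vec_swap:
  assumes "T \<in> carrier_mat n n" "hermitian_mat T" "v \<in> carrier_vec n" "w \<in> carrier_vec n"
  shows "conjugate v \<bullet> (T *\<^sub>v w) = conjugate (T *\<^sub>v v) \<bullet> w"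
  using mat_adjoint_vec_swap[of T n n v w] assms unfolding hermitian_mat_def by simp

lemma cscalar_self_nonneg:
  fixes v :: "complex vec"
  shows "0 \<le> conjugate v \<bullet> v"
  using conjugate_square_ge_0_vec[of v] comm_scalar_prod[of v "dim_vec v" "conjugate v"]
  by (simp add: scalar_prod_def)

lemma cscalar_self_eq_0_iff:
  fixes v :: "complex vec"
  assumes "v \<in> carrier_vec n"
  shows "conjugate v \<bullet> v = 0 \<longleftrightarrow> v = 0\<^sub>v n"
proof -
  have "conjugate v \<bullet> v = v \<bullet>c v" using comm_scalar_prod[of "conjugate v" n v] assms by simp
  then show ?thesis using conjugate_square_eq_0_vec[OF assms] by simp
qed

lemma psd_mat_adjoint_mult_self:
  assumes X: "X \<in> carrier_mat m n"
  shows "psd_mat n (mat_adjoint X * X)"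
  unfolding psd_mat_def
proof (intro conjI ballI)
  show "mat_adjoint X * X \<in> carrier_mat n n" by (rule mult_carrier_mat[OF mat_adjoint_carrier[OF X] X])
  show "hermitian_mat (mat_adjoint X * X)" by (rule hermitian_mat_adjoint_mult_self[OF X])
  fix v :: "complex vec" assume v: "v \<in> carrier_vec n"
  have "conjugate v \<bullet> ((mat_adjoint X * X) *\<^sub>v v) = conjugate (X *\<^sub>v v) \<bullet> (X *\<^sub>v v)"
    using X v by (simp add: assoc_mult_mat_vec[OF mat_adjoint_carrier[OF X] X v] mat_adjoint_vec_swap[OF X v])
  then show "0 \<le> conjugate v \<bullet> ((mat_adjoint X * X) *\<^sub>v v)" by (simp add: cscalar_self_nonneg)
qed

lemma psd_mat_eigenvalue_nonneg:
  assumes A: "psd_mat n A" and U: "unitary_mat n U"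
    and AU: "A * U = U * mat_diag n (\<lambda>i. complex_of_real (lam i))" and j: "j < n"
  shows "0 \<le> lam j"
proof -
  have Ac: "A \<in> carrier_mat n n" using A unfolding psd_mat_def by simp
  have Uc: "U \<in> carrier_mat n n" using U by (rule unitary_mat_carrier)
  have u: "col U j \<in> carrier_vec n" using Uc by (simp add: carrier_vecI)
  have "conjugate (col U j) \<bullet> (A *\<^sub>v col U j) = complex_of_real (lam j)"
    using mult_col_diagonalized[OF Ac Uc AU j] unitary_col_cscalar[OF U j] u by simp
  moreover have "0 \<le> conjugate (col U j) \<bullet> (A *\<^sub>v col U j)" using A u unfolding psd_mat_def by blast
  ultimately show ?thesis by (simp add: less_eq_complex_def)
qed

lemma mat_diag_sqrt_square:
  assumes "\<And>j. j < n \<Longrightarrow> 0 \<le> f j"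
  shows "mat_diag n (\<lambda>i. complex_of_real (sqrt (f i))) * mat_diag n (\<lambda>i. complex_of_real (sqrt (f i)))
    = mat_diag n (\<lambda>i. complex_of_real (f i))"
  unfolding mat_diag_diag
  by (rule eq_matI) (use assms in \<open>auto simp: mat_diag_def simp flip: of_real_mult\<close>)

lemma psd_mat_unitary_conj_diag:
  assumes U: "unitary_mat n U" and f: "\<And>j. j < n \<Longrightarrow> 0 \<le> f j"
  shows "psd_mat n (U * mat_diag n (\<lambda>i. complex_of_real (f i)) * mat_adjoint U)"
proof -
  have Uc: "U \<in> carrier_mat n n" using U by (rule unitary_mat_carrier)
  note Ua = mat_adjoint_carrier[OF Uc]
  define D where "D = mat_diag n (\<lambda>i. complex_of_real (sqrt (f i)))"
  have D: "D \<in> carrier_mat n n" and Dadj: "mat_adjoint D = D" unfolding D_def by simp_all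
  define R where "R = D * mat_adjoint U"
  have R: "R \<in> carrier_mat n n" unfolding R_def using D Ua by simp
  have "mat_adjoint R * R = (U * D) * (D * mat_adjoint U)"
    unfolding R_def mat_adjoint_mult[OF D Ua] Dadj by simp
  also have "\<dots> = U * ((D * D) * mat_adjoint U)"
    unfolding assoc_mult_mat[OF Uc D mult_carrier_mat[OF D Ua]] assoc_mult_mat[OF D D Ua] ..
  also have "\<dots> = U * (D * D) * mat_adjoint U"
    by (rule assoc_mult_mat[OF Uc mult_carrier_mat[OF D D] Ua, symmetric])
  finally show ?thesis
    using psd_mat_adjoint_mult_self[OF R] mat_diag_sqrt_square[OF f] unfolding D_def by simp
qed

(* y = T u - s u satisfies T y = -s y, which the positivity of T only allows for y = 0. *)
lemma psd_root_eigenvector: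
  assumes T: "psd_mat n T" and u: "u \<in> carrier_vec n" and s: "s \<ge> 0"
    and TTu: "T *\<^sub>v (T *\<^sub>v u) = complex_of_real (s * s) \<cdot>\<^sub>v u"
  shows "T *\<^sub>v u = complex_of_real s \<cdot>\<^sub>v u"
proof -
  have Tc: "T \<in> carrier_mat n n" and hT: "hermitian_mat T" using T unfolding psd_mat_def by auto
  define y where "y = T *\<^sub>v u - complex_of_real s \<cdot>\<^sub>v u"
  have y: "y \<in> carrier_vec n" unfolding y_def using Tc u by simp
  have Ty: "T *\<^sub>v y = - complex_of_real s \<cdot>\<^sub>v y"
    unfolding y_def using Tc u
    by (simp add: mult_minus_distrib_mat_vec mult_mat_vec TTu) (auto simp: algebra_simps)
  have "conjugate y \<bullet> y = conjugate y \<bullet> (T *\<^sub>v u) - complex_of_real s * (conjugate y \<bullet> u)"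
    using scalar_prod_minus_distrib[of "conjugate y" n "T *\<^sub>v u" "complex_of_real s \<cdot>\<^sub>v u"] Tc u y
    by (simp add: y_def[symmetric])
  also have "conjugate y \<bullet> (T *\<^sub>v u) = - complex_of_real s * (conjugate y \<bullet> u)"
    unfolding hermitian_mat_vec_swap[OF Tc hT y u] Ty using y u by (simp add: conjugate_smult_vec)
  finally have yy: "conjugate y \<bullet> y = - 2 * complex_of_real s * (conjugate y \<bullet> u)" by simp
  have "0 \<le> conjugate y \<bullet> (T *\<^sub>v y)" using T y unfolding psd_mat_def by blast
  then have "0 \<le> - complex_of_real s * (conjugate y \<bullet> y)" unfolding Ty using y by simp
  then have psd: "s * Re (conjugate y \<bullet> y) \<le> 0" by (simp add: less_eq_complex_def)
  have nonneg: "0 \<le> Re (conjugate y \<bullet> y)" "Im (conjugate y \<bullet> y) = 0"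
    using cscalar_self_nonneg[of y] by (simp_all add: less_eq_complex_def)
  have "Re (conjugate y \<bullet> y) = 0"
  proof (cases "s = 0")
    case True
    then show ?thesis using yy by simp
  next
    case False
    then show ?thesis using psd nonneg s by (simp add: mult_le_0_iff)
  qed
  then have "conjugate y \<bullet> y = 0" using nonneg by (simp add: complex_eq_iff)
  then have y0: "y = 0\<^sub>v n" using cscalar_self_eq_0_iff[OF y] by simp
  show ?thesis
  proof (rule eq_vecI)
    fix i assume "i < dim_vec (complex_of_real s \<cdot>\<^sub>v u)"
    then have i: "i < n" using u by simp
    have "y $ i = 0" using y0 i by simp
    then show "(T *\<^sub>v u) $ i = (complex_of_real s \<cdot>\<^sub>v u) $ i" using i Tc u unfolding y_def by simp
  qed (use Tc u in simp)
qed

lemma psd_root_unitary_conj: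
  assumes T: "psd_mat n T" "T * T = A" and A: "A \<in> carrier_mat n n" and U: "unitary_mat n U"
    and AU: "A * U = U * mat_diag n (\<lambda>i. complex_of_real (lam i))" and lam: "\<And>j. j < n \<Longrightarrow> 0 \<le> lam j"
  shows "T = U * mat_diag n (\<lambda>i. complex_of_real (sqrt (lam i))) * mat_adjoint U"
proof -
  have Tc: "T \<in> carrier_mat n n" using T unfolding psd_mat_def by simp
  have Uc: "U \<in> carrier_mat n n" using U by (rule unitary_mat_carrier)
  have "T * U = U * mat_diag n (\<lambda>i. complex_of_real (sqrt (lam i)))"
  proof (rule eq_matI)
    fix i j assume "i < dim_row (U * mat_diag n (\<lambda>i. complex_of_real (sqrt (lam i))))"
      "j < dim_col (U * mat_diag n (\<lambda>i. complex_of_real (sqrt (lam i))))"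
    then have i: "i < n" and j: "j < n" using Uc by auto
    have "T *\<^sub>v (T *\<^sub>v col U j) = complex_of_real (sqrt (lam j) * sqrt (lam j)) \<cdot>\<^sub>v col U j"
      using assoc_mult_mat_vec[OF Tc Tc col_carrier_vec[OF j Uc]] T(2) mult_col_diagonalized[OF A Uc AU j]
        lam[OF j] by simp
    then have "T *\<^sub>v col U j = complex_of_real (sqrt (lam j)) \<cdot>\<^sub>v col U j"
      by (rule psd_root_eigenvector[OF T(1) col_carrier_vec[OF j Uc] real_sqrt_ge_zero[OF lam[OF j]]])
    then have "(T *\<^sub>v col U j) $ i = complex_of_real (sqrt (lam j)) * U $$ (i, j)"
      using Uc i j by simp
    then show "(T * U) $$ (i, j) = (U * mat_diag n (\<lambda>i. complex_of_real (sqrt (lam i)))) $$ (i, j)"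
      using Tc Uc i j by (simp add: mat_diag_mult_right[OF Uc])
  qed (use Tc Uc in auto)
  then show ?thesis by (rule diagonalized_eq_conj[OF Tc U _ mat_diag_dim])
qed

(* psd_sqrt is a definite description: it is evaluated through the uniqueness of the root. *)
lemma psd_sqrt_unitary_conj:
  assumes A: "psd_mat n A" and U: "unitary_mat n U"
    and AU: "A * U = U * mat_diag n (\<lambda>i. complex_of_real (lam i))"
  shows "psd_sqrt A = U * mat_diag n (\<lambda>i. complex_of_real (sqrt (lam i))) * mat_adjoint U"
proof -
  have Ac: "A \<in> carrier_mat n n" using A unfolding psd_mat_def by simp
  have lam: "\<And>j. j < n \<Longrightarrow> 0 \<le> lam j" using psd_mat_eigenvalue_nonneg[OF A U AU] .
  define D where "D = mat_diag n (\<lambda>i. complex_of_real (sqrt (lam i)))"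
  have D: "D \<in> carrier_mat n n" unfolding D_def by simp
  define S where "S = U * D * mat_adjoint U"
  have S: "psd_mat n S" unfolding S_def D_def using psd_mat_unitary_conj_diag[OF U] lam by simp
  have "S * S = U * (D * D) * mat_adjoint U" unfolding S_def by (rule unitary_conj_mult[OF U D D])
  also have "D * D = mat_diag n (\<lambda>i. complex_of_real (lam i))"
    unfolding D_def by (rule mat_diag_sqrt_square[OF lam])
  finally have SS: "S * S = A" using diagonalized_eq_conj[OF Ac U AU mat_diag_dim] by simp
  have unique: "T = S" if "psd_mat n T" "T * T = A" for T
    unfolding S_def D_def by (rule psd_root_unitary_conj[OF that Ac U AU lam])
  have "psd_sqrt A = S"
    unfolding psd_sqrt_def carrier_matD(1)[OF Ac] by (rule the_equality) (use S SS unique in blast)+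
  then show ?thesis unfolding S_def D_def .
qed

lemma trace_norm_eq_sum_sqrt_eigenvalues:
  assumes G: "G \<in> carrier_mat m n" and U: "unitary_mat n U"
    and GU: "(mat_adjoint G * G) * U = U * mat_diag n (\<lambda>i. complex_of_real (lam i))"
  shows "trace_norm G = (\<Sum>j<n. sqrt (lam j))"
  unfolding trace_norm_def psd_sqrt_unitary_conj[OF psd_mat_adjoint_mult_self[OF G] U GU]
    trace_unitary_conj_diag[OF U] by simp

lemma density_trace_square_le_one:
  assumes rho: "density_mat d \<rho>"
  shows "Re (trace_mat (\<rho> * \<rho>)) \<le> 1"
proof -
  have psd: "psd_mat d \<rho>" and tr: "trace_mat \<rho> = 1" using rho unfolding density_mat_def by auto
  have rc: "\<rho> \<in> carrier_mat d d" and "hermitian_mat \<rho>" using psd unfolding psd_mat_def by auto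
  then obtain U lam where U: "unitary_mat d U"
    and AU: "\<rho> * U = U * mat_diag d (\<lambda>i. complex_of_real (lam i))"
    using hermitian_unitarily_diagonalizable by blast
  have lam: "\<And>j. j < d \<Longrightarrow> 0 \<le> lam j" by (rule psd_mat_eigenvalue_nonneg[OF psd U AU])
  note rho_eq = diagonalized_eq_conj[OF rc U AU mat_diag_dim]
  have sum1: "(\<Sum>j<d. lam j) = 1"
    using tr unfolding rho_eq trace_unitary_conj_diag[OF U] of_real_sum[symmetric] of_real_eq_1_iff .
  have "trace_mat (\<rho> * \<rho>) = complex_of_real (\<Sum>j<d. lam j * lam j)"
    unfolding rho_eq unitary_conj_mult[OF U mat_diag_dim mat_diag_dim] mat_diag_diag
      trace_unitary_conj_diag[OF U] by simp
  moreover have "(\<Sum>j<d. lam j * lam j) \<le> (\<Sum>j<d. lam j)"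
  proof (rule sum_mono)
    fix j assume j: "j \<in> {..<d}"
    have "lam j \<le> 1" using member_le_sum[of j "{..<d}" lam] lam j sum1 by auto
    then show "lam j * lam j \<le> lam j" using lam j by (simp add: mult_left_le)
  qed
  ultimately show ?thesis using sum1 by simp
qed

section \<open>Trace norm of a mixture of rank-one matrices\<close>

lemma cmod_sum_cnj_mult_le:
  fixes x y :: "'a \<Rightarrow> complex"
  shows "cmod (\<Sum>i\<in>I. cnj (x i) * y i) \<le> sqrt (\<Sum>i\<in>I. (cmod (x i))\<^sup>2) * sqrt (\<Sum>i\<in>I. (cmod (y i))\<^sup>2)"
proof -
  have "cmod (\<Sum>i\<in>I. cnj (x i) * y i) \<le> (\<Sum>i\<in>I. \<bar>cmod (x i)\<bar> * \<bar>cmod (y i)\<bar>)"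
    using norm_sum[of "\<lambda>i. cnj (x i) * y i" I] by (simp add: norm_mult)
  also have "\<dots> \<le> L2_set (\<lambda>i. cmod (x i)) I * L2_set (\<lambda>i. cmod (y i)) I" by (rule L2_set_mult_ineq)
  finally show ?thesis unfolding L2_set_def .
qed

lemma sum_cnj_mult_self: "(\<Sum>k\<in>K. cnj (f k) * f k) = complex_of_real (\<Sum>k\<in>K. (cmod (f k))\<^sup>2)"
  unfolding of_real_sum by (rule sum.cong) (simp_all only: complex_norm_square mult.commute)

definition orthonormal_or_zero :: "nat \<Rightarrow> nat \<Rightarrow> (nat \<Rightarrow> nat \<Rightarrow> complex) \<Rightarrow> bool" where
  "orthonormal_or_zero J m w \<longleftrightarrow>
     (\<forall>j<J. \<forall>k<J. j \<noteq> k \<longrightarrow> (\<Sum>r<m. cnj (w j r) * w k r) = 0) \<and>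
     (\<forall>j<J. (\<Sum>r<m. cnj (w j r) * w j r) = 1 \<or> (\<forall>r<m. w j r = 0))"

lemma orthonormal_or_zero_cnj:
  "orthonormal_or_zero J m w \<Longrightarrow> orthonormal_or_zero J m (\<lambda>j r. cnj (w j r))"
proof -
  have "(\<Sum>r<m. cnj (cnj (w j r)) * cnj (w k r)) = cnj (\<Sum>r<m. cnj (w j r) * w k r)" for j k
    by simp
  then show "orthonormal_or_zero J m w \<Longrightarrow> orthonormal_or_zero J m (\<lambda>j r. cnj (w j r))"
    unfolding orthonormal_or_zero_def by (metis complex_cnj_one complex_cnj_zero)
qed

lemma bessel_inequality:
  assumes w: "orthonormal_or_zero J m w"
  shows "(\<Sum>j<J. (cmod (\<Sum>r<m. cnj (w j r) * x r))\<^sup>2) \<le> (\<Sum>r<m. (cmod (x r))\<^sup>2)"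
proof -
  define c where "c j = (\<Sum>r<m. cnj (w j r) * x r)" for j
  define T where "T = (\<Sum>j<J. (cmod (c j))\<^sup>2)"
  define X where "X = (\<Sum>r<m. (cmod (x r))\<^sup>2)"
  define y where "y r = (\<Sum>j<J. c j * w j r)" for r
  have wy: "(\<Sum>r<m. cnj (w j r) * y r) = c j" if j: "j < J" for j
  proof -
    have "(\<Sum>r<m. cnj (w j r) * y r) = (\<Sum>k<J. c k * (\<Sum>r<m. cnj (w j r) * w k r))"
      unfolding y_def by (simp add: sum_distrib_left sum_distrib_right mult_ac, rule sum.swap)
    also have "\<dots> = c j * (\<Sum>r<m. cnj (w j r) * w j r)"
      using w j unfolding orthonormal_or_zero_def by (subst sum.remove[of _ j]) auto
    also have "\<dots> = c j" using w j unfolding orthonormal_or_zero_def c_def by auto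
    finally show ?thesis .
  qed
  have yx: "(\<Sum>r<m. cnj (y r) * x r) = complex_of_real T"
  proof -
    have "(\<Sum>r<m. cnj (y r) * x r) = (\<Sum>j<J. cnj (c j) * c j)"
      unfolding y_def c_def cnj_sum sum_distrib_left sum_distrib_right
      by (subst sum.swap) (simp add: mult_ac)
    then show ?thesis unfolding T_def sum_cnj_mult_self .
  qed
  have yy: "(\<Sum>r<m. (cmod (y r))\<^sup>2) = T"
  proof -
    have cy: "cnj (y r) = (\<Sum>j<J. cnj (c j) * cnj (w j r))" for r unfolding y_def by simp
    have "(\<Sum>r<m. cnj (y r) * y r) = (\<Sum>j<J. cnj (c j) * (\<Sum>r<m. cnj (w j r) * y r))"
      unfolding cy sum_distrib_left sum_distrib_right by (subst sum.swap) (simp add: mult_ac)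
    also have "\<dots> = (\<Sum>j<J. cnj (c j) * c j)" by (simp add: wy)
    finally show ?thesis unfolding sum_cnj_mult_self T_def of_real_eq_iff .
  qed
  have T0: "0 \<le> T" unfolding T_def by (simp add: sum_nonneg)
  have "sqrt T * sqrt T \<le> sqrt T * sqrt X"
    using cmod_sum_cnj_mult_le[of y x "{..<m}"] yx yy T0 unfolding X_def by simp
  moreover have "0 \<le> X" unfolding X_def by (simp add: sum_nonneg)
  ultimately have "sqrt T \<le> sqrt X"
    using T0 mult_le_cancel_left_pos[of "sqrt T" "sqrt T" "sqrt X"] by (cases "T = 0") auto
  then have "T \<le> X" by simp
  then show ?thesis unfolding T_def X_def c_def .
qed

lemma unitary_cols_orthonormal:
  assumes U: "unitary_mat n U"
  shows "orthonormal_or_zero n n (\<lambda>j c. U $$ (c, j))"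
proof -
  have Uc: "U \<in> carrier_mat n n" using U by (rule unitary_mat_carrier)
  have "(\<Sum>c<n. cnj (U $$ (c, j)) * U $$ (c, k)) = 1\<^sub>m n $$ (j, k)" if "j < n" "k < n" for j k
    using index_mult_mat_sum[OF mat_adjoint_carrier[OF Uc] Uc that] unitary_mat_adjoint_mult[OF U] Uc that
    by simp
  then show ?thesis unfolding orthonormal_or_zero_def by simp
qed

(* Singular value decomposition: if G^* G U = U diag lam, the columns G u_j are orthogonal with squared
   lengths lam_j, so their normalisations w_j (zero if lam_j = 0) satisfy <w_j, G u_j> = sqrt lam_j. *)
lemma trace_norm_as_pairing:
  assumes G: "G \<in> carrier_mat m n"
  obtains w u where "orthonormal_or_zero n m w" "orthonormal_or_zero n n u"
    "complex_of_real (trace_norm G) = (\<Sum>j<n. \<Sum>r<m. \<Sum>c<n. cnj (w j r) * G $$ (r, c) * u j c)"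
proof -
  note Ga = mat_adjoint_carrier[OF G]
  have A: "mat_adjoint G * G \<in> carrier_mat n n" by (rule mult_carrier_mat[OF Ga G])
  obtain U lam where U: "unitary_mat n U"
    and AU: "(mat_adjoint G * G) * U = U * mat_diag n (\<lambda>i. complex_of_real (lam i))"
    using hermitian_unitarily_diagonalizable[OF A hermitian_mat_adjoint_mult_self[OF G]] by blast
  have Uc: "U \<in> carrier_mat n n" using U by (rule unitary_mat_carrier)
  have lam: "\<And>j. j < n \<Longrightarrow> 0 \<le> lam j"
    by (rule psd_mat_eigenvalue_nonneg[OF psd_mat_adjoint_mult_self[OF G] U AU])
  define g where "g j r = (G * U) $$ (r, j)" for j r
  define s where "s j = sqrt (lam j)" for j
  define w where "w j r = g j r / complex_of_real (s j)" for j r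
  have GU: "G * U \<in> carrier_mat m n" using G Uc by simp
  have "mat_adjoint (G * U) * (G * U) = mat_adjoint U * ((mat_adjoint G * G) * U)"
    using Ga G Uc by (simp add: mat_adjoint_mult[OF G Uc] assoc_mult_mat[of _ n m _ n _ n]
        assoc_mult_mat[of _ n n _ m _ n])
  also have "\<dots> = mat_diag n (\<lambda>i. complex_of_real (lam i))"
    unfolding AU by (rule unitary_cancel_left[OF U mat_diag_dim])
  finally have GUGU: "mat_adjoint (G * U) * (G * U) = mat_diag n (\<lambda>i. complex_of_real (lam i))" .
  have gram: "(\<Sum>r<m. cnj (g j r) * g k r) = (if j = k then complex_of_real (lam j) else 0)"
    if "j < n" "k < n" for j k
    using index_mult_mat_sum[OF mat_adjoint_carrier[OF GU] GU that] GUGU carrier_matD[OF GU] that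
    by (auto simp: g_def mat_diag_def intro!: sum.cong)
  have ss: "complex_of_real (s j) * complex_of_real (s j) = complex_of_real (lam j)" if "j < n" for j
    using lam[OF that] unfolding s_def by (simp flip: of_real_mult)
  have w: "orthonormal_or_zero n m w"
    unfolding orthonormal_or_zero_def
  proof (intro conjI allI impI)
    fix j k assume "j < n" "k < n" "j \<noteq> k"
    then show "(\<Sum>r<m. cnj (w j r) * w k r) = 0"
      using gram by (simp add: w_def sum_divide_distrib[symmetric])
  next
    fix j assume j: "j < n"
    show "(\<Sum>r<m. cnj (w j r) * w j r) = 1 \<or> (\<forall>r<m. w j r = 0)"
      using gram[OF j j] ss[OF j] by (cases "s j = 0") (auto simp: w_def sum_divide_distrib[symmetric])
  qed
  have wg: "(\<Sum>r<m. cnj (w j r) * g j r) = complex_of_real (s j)" if "j < n" for j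
    using gram[OF that that] ss[OF that]
    by (cases "s j = 0") (auto simp: w_def sum_divide_distrib[symmetric] field_simps)
  have "complex_of_real (trace_norm G) = (\<Sum>j<n. \<Sum>r<m. cnj (w j r) * g j r)"
    unfolding trace_norm_eq_sum_sqrt_eigenvalues[OF G U AU] of_real_sum s_def[symmetric] by (simp add: wg)
  also have "\<dots> = (\<Sum>j<n. \<Sum>r<m. \<Sum>c<n. cnj (w j r) * G $$ (r, c) * U $$ (c, j))"
    unfolding g_def using G Uc
    by (auto simp: index_mult_mat_sum[OF G Uc] sum_distrib_left mult.assoc simp del: index_mult_mat
        intro!: sum.cong)
  finally show ?thesis using that w unitary_cols_orthonormal[OF U] by blast
qed

lemma rank_one_pairing_bound:
  assumes w: "orthonormal_or_zero J m w" and u: "orthonormal_or_zero J n u"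
  shows "cmod (\<Sum>j<J. \<Sum>r<m. \<Sum>c<n. cnj (w j r) * (a r * b c) * u j c)
    \<le> sqrt (\<Sum>r<m. (cmod (a r))\<^sup>2) * sqrt (\<Sum>c<n. (cmod (b c))\<^sup>2)"
proof -
  define \<alpha> where "\<alpha> j = (\<Sum>r<m. cnj (w j r) * a r)" for j
  define \<beta> where "\<beta> j = (\<Sum>c<n. cnj (cnj (u j c)) * b c)" for j
  have "(\<Sum>j<J. \<Sum>r<m. \<Sum>c<n. cnj (w j r) * (a r * b c) * u j c) = (\<Sum>j<J. cnj (cnj (\<alpha> j)) * \<beta> j)"
    unfolding complex_cnj_cnj \<alpha>_def \<beta>_def sum_product by (simp add: mult_ac)
  also have "cmod \<dots> \<le> sqrt (\<Sum>j<J. (cmod (cnj (\<alpha> j)))\<^sup>2) * sqrt (\<Sum>j<J. (cmod (\<beta> j))\<^sup>2)"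
    by (rule cmod_sum_cnj_mult_le)
  also have "\<dots> \<le> sqrt (\<Sum>r<m. (cmod (a r))\<^sup>2) * sqrt (\<Sum>c<n. (cmod (b c))\<^sup>2)"
    unfolding complex_mod_cnj \<alpha>_def \<beta>_def
    using bessel_inequality[OF w, of a] bessel_inequality[OF orthonormal_or_zero_cnj[OF u], of b]
    by (intro mult_mono) (auto intro: sum_nonneg)
  finally show ?thesis .
qed

lemma trace_norm_rank_one_mixture:
  assumes G: "G \<in> carrier_mat m n" and p: "\<And>i. i < K \<Longrightarrow> 0 \<le> p i"
    and G_eq: "\<And>r c. r < m \<Longrightarrow> c < n \<Longrightarrow> G $$ (r, c) = (\<Sum>i<K. complex_of_real (p i) * (a i r * b i c))"
  shows "trace_norm G \<le> (\<Sum>i<K. p i * (sqrt (\<Sum>r<m. (cmod (a i r))\<^sup>2) * sqrt (\<Sum>c<n. (cmod (b i c))\<^sup>2)))"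
proof -
  obtain w u where w: "orthonormal_or_zero n m w" and u: "orthonormal_or_zero n n u"
    and tn: "complex_of_real (trace_norm G) = (\<Sum>j<n. \<Sum>r<m. \<Sum>c<n. cnj (w j r) * G $$ (r, c) * u j c)"
    using trace_norm_as_pairing[OF G] by blast
  have "trace_norm G \<le> cmod (complex_of_real (trace_norm G))" by simp
  also have "complex_of_real (trace_norm G) = (\<Sum>i<K. complex_of_real (p i) *
      (\<Sum>j<n. \<Sum>r<m. \<Sum>c<n. cnj (w j r) * (a i r * b i c) * u j c))"
    unfolding tn by (simp add: G_eq sum_distrib_left sum_distrib_right mult_ac sum.swap[of _ "{..<K}"])
  also have "cmod \<dots> \<le> (\<Sum>i<K. p i * (sqrt (\<Sum>r<m. (cmod (a i r))\<^sup>2) * sqrt (\<Sum>c<n. (cmod (b i c))\<^sup>2)))"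
    using p rank_one_pairing_bound[OF w u]
    by (intro order.trans[OF norm_sum] sum_mono) (simp add: norm_mult mult_left_mono)
  finally show ?thesis .
qed

section \<open>Outcome probabilities of (N,M)-POVMs\<close>

lemma trace_mult_hermitian_real:
  assumes A: "A \<in> carrier_mat n n" "hermitian_mat A" and B: "B \<in> carrier_mat n n" "hermitian_mat B"
  shows "trace_mat (A * B) = complex_of_real (Re (trace_mat (A * B)))"
proof -
  have "cnj (trace_mat (A * B)) = (\<Sum>i<n. \<Sum>j<n. A $$ (j, i) * B $$ (i, j))"
    unfolding trace_mult_sum[OF A(1) B(1)] cnj_sum
    using hermitian_mat_cnj_index[OF A(2,1)] hermitian_mat_cnj_index[OF B(2,1)] by simp
  also have "\<dots> = trace_mat (A * B)" unfolding trace_mult_sum[OF A(1) B(1)] by (subst sum.swap) simp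
  finally have "Im (trace_mat (A * B)) = 0" using Reals_cnj_iff complex_is_Real_iff by blast
  then show ?thesis by (simp add: complex_eq_iff)
qed

lemma trace_mult_hermitian_self:
  assumes X: "X \<in> carrier_mat n n" "hermitian_mat X"
  shows "trace_mat (X * X) = complex_of_real (\<Sum>i<n. \<Sum>j<n. (cmod (X $$ (i, j)))\<^sup>2)"
proof -
  have "X $$ (i, j) * X $$ (j, i) = complex_of_real ((cmod (X $$ (i, j)))\<^sup>2)" if "i < n" "j < n" for i j
    by (subst hermitian_mat_index_swap[OF X(2,1) that]) (rule complex_norm_square[symmetric])
  then show ?thesis unfolding trace_mult_sum[OF X(1) X(1)] of_real_sum by (auto intro!: sum.cong)
qed

lemma trace_mult_hermitian_cauchy_schwarz:
  assumes X: "X \<in> carrier_mat n n" "hermitian_mat X" and Y: "Y \<in> carrier_mat n n" "hermitian_mat Y"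
  shows "(cmod (trace_mat (X * Y)))\<^sup>2 \<le> Re (trace_mat (X * X)) * Re (trace_mat (Y * Y))"
proof -
  define I where "I = {..<n} \<times> {..<n}"
  have swap: "(\<Sum>(i, j)\<in>I. (cmod (Z $$ (j, i)))\<^sup>2) = (\<Sum>i<n. \<Sum>j<n. (cmod (Z $$ (i, j)))\<^sup>2)" for Z
    unfolding I_def sum.cartesian_product[symmetric] by (rule sum.swap)
  have "trace_mat (X * Y) = (\<Sum>(i, j)\<in>I. cnj (X $$ (j, i)) * Y $$ (j, i))"
    unfolding trace_mult_sum[OF X(1) Y(1)] I_def sum.cartesian_product[symmetric]
    using hermitian_mat_cnj_index[OF X(2,1)] by (auto intro!: sum.cong)
  then have "cmod (trace_mat (X * Y)) \<le> sqrt (\<Sum>(i, j)\<in>I. (cmod (X $$ (j, i)))\<^sup>2) * sqrt (\<Sum>(i, j)\<in>I. (cmod (Y $$ (j, i)))\<^sup>2)"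
    using cmod_sum_cnj_mult_le[of "\<lambda>(i, j). X $$ (j, i)" "\<lambda>(i, j). Y $$ (j, i)" I]
    by (simp add: case_prod_unfold)
  also have "\<dots> = sqrt (Re (trace_mat (X * X))) * sqrt (Re (trace_mat (Y * Y)))"
    unfolding trace_mult_hermitian_self[OF X] trace_mult_hermitian_self[OF Y] swap by simp
  finally show ?thesis
    by (metis abs_of_nonneg norm_ge_zero real_sqrt_abs real_sqrt_le_iff real_sqrt_mult)
qed

lemma sum_swap_nested:
  "(\<Sum>i\<in>I. \<Sum>j\<in>J. \<Sum>a\<in>A. \<Sum>b\<in>B. f i j a b) = (\<Sum>a\<in>A. \<Sum>b\<in>B. \<Sum>i\<in>I. \<Sum>j\<in>J. f i j a b)"
proof -
  have "(\<Sum>i\<in>I. \<Sum>j\<in>J. \<Sum>a\<in>A. \<Sum>b\<in>B. f i j a b) = (\<Sum>i\<in>I. \<Sum>a\<in>A. \<Sum>j\<in>J. \<Sum>b\<in>B. f i j a b)"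
    by (rule sum.cong[OF refl], rule sum.swap)
  also have "\<dots> = (\<Sum>a\<in>A. \<Sum>i\<in>I. \<Sum>b\<in>B. \<Sum>j\<in>J. f i j a b)"
    by (subst sum.swap) (rule sum.cong[OF refl], rule sum.cong[OF refl], rule sum.swap)
  also have "\<dots> = (\<Sum>a\<in>A. \<Sum>b\<in>B. \<Sum>i\<in>I. \<Sum>j\<in>J. f i j a b)"
    by (rule sum.cong[OF refl], rule sum.swap)
  finally show ?thesis .
qed

lemma NM_POVMD:
  assumes "NM_POVM d N M x E"
  shows "2 \<le> M" and "real d / real M ^ 2 < x"
    and "\<And>\<alpha> k. \<alpha> < N \<Longrightarrow> k < M \<Longrightarrow> psd_mat d (E \<alpha> k)"
    and "\<And>\<alpha> i j. \<alpha> < N \<Longrightarrow> i < d \<Longrightarrow> j < d \<Longrightarrow> (\<Sum>k<M. E \<alpha> k $$ (i, j)) = 1\<^sub>m d $$ (i, j)"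
    and "\<And>\<alpha> k. \<alpha> < N \<Longrightarrow> k < M \<Longrightarrow> trace_mat (E \<alpha> k) = complex_of_real (real d / real M)"
    and "\<And>\<alpha> k l. \<alpha> < N \<Longrightarrow> k < M \<Longrightarrow> l < M \<Longrightarrow> trace_mat (E \<alpha> k * E \<alpha> l)
           = complex_of_real (if k = l then x else (real d - real M * x) / (real M * (real M - 1)))"
    and "\<And>\<alpha> \<beta> k l. \<alpha> < N \<Longrightarrow> \<beta> < N \<Longrightarrow> k < M \<Longrightarrow> l < M \<Longrightarrow> \<alpha> \<noteq> \<beta> \<Longrightarrow>
           trace_mat (E \<alpha> k * E \<beta> l) = complex_of_real (real d / real M ^ 2)"
  using assms unfolding NM_POVM_def by auto

lemma NM_POVM_carrier: "NM_POVM d N M x E \<Longrightarrow> \<alpha> < N \<Longrightarrow> k < M \<Longrightarrow> E \<alpha> k \<in> carrier_mat d d"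
  using NM_POVMD(3) unfolding psd_mat_def by blast

lemma IC_NM_POVM_carrier: "IC_NM_POVM d N M x E \<Longrightarrow> \<alpha> < N \<Longrightarrow> k < M \<Longrightarrow> E \<alpha> k \<in> carrier_mat d d"
  unfolding IC_NM_POVM_def using NM_POVM_carrier by blast

lemma NM_POVM_hermitian: "NM_POVM d N M x E \<Longrightarrow> \<alpha> < N \<Longrightarrow> k < M \<Longrightarrow> hermitian_mat (E \<alpha> k)"
  using NM_POVMD(3) unfolding psd_mat_def by blast

lemma NM_POVM_trace_sum:
  assumes P: "NM_POVM d N M x E" and \<alpha>: "\<alpha> < N" and Z: "Z \<in> carrier_mat d d"
  shows "(\<Sum>k<M. trace_mat (E \<alpha> k * Z)) = trace_mat Z"
proof -
  have "(\<Sum>k<M. trace_mat (E \<alpha> k * Z)) = (\<Sum>i<d. \<Sum>j<d. (\<Sum>k<M. E \<alpha> k $$ (i, j)) * Z $$ (j, i))"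
    using trace_mult_sum[OF NM_POVM_carrier[OF P \<alpha>] Z]
    by (simp add: sum_distrib_right sum.swap[of _ "{..<M}"])
  also have "\<dots> = (\<Sum>i<d. \<Sum>j<d. if i = j then Z $$ (j, i) else 0)"
    by (intro sum.cong refl) (simp add: NM_POVMD(4)[OF P \<alpha>])
  also have "\<dots> = trace_mat Z" using Z by (simp add: trace_mat_def)
  finally show ?thesis .
qed

lemma NM_POVM_prob_real:
  assumes P: "NM_POVM d N M x E" and rho: "density_mat d \<rho>" and "\<alpha> < N" "k < M"
  shows "trace_mat (E \<alpha> k * \<rho>) = complex_of_real (Re (trace_mat (E \<alpha> k * \<rho>)))"
  using rho assms(3,4) unfolding density_mat_def psd_mat_def
  by (intro trace_mult_hermitian_real[OF NM_POVM_carrier[OF P] NM_POVM_hermitian[OF P]]) auto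

lemma NM_POVM_prob_sum:
  assumes P: "NM_POVM d N M x E" and rho: "density_mat d \<rho>" and \<alpha>: "\<alpha> < N"
  shows "(\<Sum>k<M. Re (trace_mat (E \<alpha> k * \<rho>))) = 1"
proof -
  have rc: "\<rho> \<in> carrier_mat d d" and tr: "trace_mat \<rho> = 1"
    using density_mat_carrier[OF rho] density_mat_trace[OF rho] .
  have "complex_of_real (\<Sum>k<M. Re (trace_mat (E \<alpha> k * \<rho>))) = (\<Sum>k<M. trace_mat (E \<alpha> k * \<rho>))"
    unfolding of_real_sum using NM_POVM_prob_real[OF P rho \<alpha>] by (intro sum.cong) auto
  also have "\<dots> = 1" using NM_POVM_trace_sum[OF P \<alpha> rc] tr by simp
  finally show ?thesis by (simp only: of_real_eq_1_iff)
qed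

definition povm_lincomb :: "nat \<Rightarrow> nat \<Rightarrow> nat \<Rightarrow> (nat \<Rightarrow> nat \<Rightarrow> real) \<Rightarrow> (nat \<Rightarrow> nat \<Rightarrow> complex mat) \<Rightarrow> complex mat" where
  "povm_lincomb d N M b E = mat d d (\<lambda>(i, j). \<Sum>\<alpha><N. \<Sum>k<M. complex_of_real (b \<alpha> k) * E \<alpha> k $$ (i, j))"

lemma povm_lincomb_carrier: "povm_lincomb d N M b E \<in> carrier_mat d d"
  unfolding povm_lincomb_def by simp

lemma povm_lincomb_hermitian:
  assumes "NM_POVM d N M x E"
  shows "hermitian_mat (povm_lincomb d N M b E)"
  using hermitian_mat_cnj_index[OF NM_POVM_hermitian[OF assms] NM_POVM_carrier[OF assms]]
  by (intro hermitian_matI[OF povm_lincomb_carrier]) (simp add: povm_lincomb_def)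

lemma trace_povm_lincomb_mult:
  assumes P: "NM_POVM d N M x E" and Z: "Z \<in> carrier_mat d d"
  shows "trace_mat (povm_lincomb d N M b E * Z) = (\<Sum>\<alpha><N. \<Sum>k<M. complex_of_real (b \<alpha> k) * trace_mat (E \<alpha> k * Z))"
proof -
  have "trace_mat (povm_lincomb d N M b E * Z)
      = (\<Sum>i<d. \<Sum>j<d. \<Sum>\<alpha><N. \<Sum>k<M. complex_of_real (b \<alpha> k) * (E \<alpha> k $$ (i, j) * Z $$ (j, i)))"
    unfolding trace_mult_sum[OF povm_lincomb_carrier Z]
    by (simp add: povm_lincomb_def sum_distrib_right mult.assoc)
  also have "\<dots> = (\<Sum>\<alpha><N. \<Sum>k<M. \<Sum>i<d. \<Sum>j<d. complex_of_real (b \<alpha> k) * (E \<alpha> k $$ (i, j) * Z $$ (j, i)))"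
    by (rule sum_swap_nested)
  also have "\<dots> = (\<Sum>\<alpha><N. \<Sum>k<M. complex_of_real (b \<alpha> k) * trace_mat (E \<alpha> k * Z))"
    using trace_mult_sum[OF NM_POVM_carrier[OF P] Z] by (simp add: sum_distrib_left)
  finally show ?thesis .
qed

lemma NM_POVM_gram_centered:
  assumes P: "NM_POVM d N M x E" and b0: "\<And>\<beta>. \<beta> < N \<Longrightarrow> (\<Sum>l<M. b \<beta> l) = 0"
    and \<alpha>: "\<alpha> < N" and k: "k < M"
  shows "(\<Sum>\<beta><N. \<Sum>l<M. complex_of_real (b \<beta> l) * trace_mat (E \<beta> l * E \<alpha> k))
    = complex_of_real ((x - (real d - real M * x) / (real M * (real M - 1))) * b \<alpha> k)"
proof -
  define c where "c = (real d - real M * x) / (real M * (real M - 1))"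
  have inner: "(\<Sum>l<M. complex_of_real (b \<beta> l) * trace_mat (E \<beta> l * E \<alpha> k))
      = (if \<beta> = \<alpha> then complex_of_real ((x - c) * b \<alpha> k) else 0)" if \<beta>: "\<beta> < N" for \<beta>
  proof (cases "\<beta> = \<alpha>")
    case True
    have "(\<Sum>l<M. complex_of_real (b \<alpha> l) * trace_mat (E \<alpha> l * E \<alpha> k))
        = complex_of_real (\<Sum>l<M. c * b \<alpha> l + (if l = k then (x - c) * b \<alpha> k else 0))"
      unfolding of_real_sum using NM_POVMD(6)[OF P \<alpha> _ k]
      by (intro sum.cong refl) (auto simp: c_def algebra_simps)
    also have "(\<Sum>l<M. c * b \<alpha> l + (if l = k then (x - c) * b \<alpha> k else 0)) = (x - c) * b \<alpha> k"
      using b0[OF \<alpha>] k by (simp add: sum.distrib sum_distrib_left[symmetric])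
    finally show ?thesis using True by simp
  next
    case False
    then have "(\<Sum>l<M. complex_of_real (b \<beta> l) * trace_mat (E \<beta> l * E \<alpha> k))
        = complex_of_real (\<Sum>l<M. b \<beta> l * (real d / real M ^ 2))"
      unfolding of_real_sum using NM_POVMD(7)[OF P \<beta> \<alpha> _ k] by (intro sum.cong refl) auto
    also have "(\<Sum>l<M. b \<beta> l * (real d / real M ^ 2)) = 0"
      unfolding sum_distrib_right[symmetric] b0[OF \<beta>] by simp
    finally show ?thesis using False by simp
  qed
  have "(\<Sum>\<beta><N. \<Sum>l<M. complex_of_real (b \<beta> l) * trace_mat (E \<beta> l * E \<alpha> k))
      = (\<Sum>\<beta><N. if \<beta> = \<alpha> then complex_of_real ((x - c) * b \<alpha> k) else 0)"
    by (rule sum.cong) (simp_all add: inner)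
  then show ?thesis using \<alpha> by (simp add: c_def)
qed

lemma trace_povm_lincomb_square:
  assumes P: "NM_POVM d N M x E" and b0: "\<And>\<alpha>. \<alpha> < N \<Longrightarrow> (\<Sum>k<M. b \<alpha> k) = 0"
  defines "Y \<equiv> povm_lincomb d N M b E" and "c \<equiv> (real d - real M * x) / (real M * (real M - 1))"
  shows "trace_mat (Y * Y) = complex_of_real ((x - c) * (\<Sum>\<alpha><N. \<Sum>k<M. (b \<alpha> k)\<^sup>2))"
proof -
  have "trace_mat (E \<alpha> k * Y) = complex_of_real ((x - c) * b \<alpha> k)" if "\<alpha> < N" "k < M" for \<alpha> k
    unfolding Y_def trace_mult_comm[OF NM_POVM_carrier[OF P that] povm_lincomb_carrier]
      trace_povm_lincomb_mult[OF P NM_POVM_carrier[OF P that]] c_def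
    by (rule NM_POVM_gram_centered[OF P b0 that])
  then have "trace_mat (Y * Y) = (\<Sum>\<alpha><N. \<Sum>k<M. complex_of_real (b \<alpha> k * ((x - c) * b \<alpha> k)))"
    unfolding Y_def trace_povm_lincomb_mult[OF P povm_lincomb_carrier] by (auto intro!: sum.cong)
  also have "\<dots> = complex_of_real ((x - c) * (\<Sum>\<alpha><N. \<Sum>k<M. (b \<alpha> k)\<^sup>2))"
    unfolding of_real_sum[symmetric] by (simp add: sum_distrib_left power2_eq_square mult_ac)
  finally show ?thesis .
qed

(* Cauchy-Schwarz for the Hilbert-Schmidt product of Y = sum b_{alpha,k} E_{alpha,k} and X = rho - 1/d:
   tr (Y X) = S, tr (Y Y) = (x - c) S and tr (X X) = tr (rho rho) - 1/d <= 1 - 1/d. *)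
lemma NM_POVM_centered_prob_bound:
  assumes P: "NM_POVM d N M x E" and rho: "density_mat d \<rho>"
  defines "c \<equiv> (real d - real M * x) / (real M * (real M - 1))"
  shows "(\<Sum>\<alpha><N. \<Sum>k<M. (Re (trace_mat (E \<alpha> k * \<rho>)) - 1 / real M)\<^sup>2) \<le> (x - c) * (1 - 1 / real d)"
proof -
  have rc: "\<rho> \<in> carrier_mat d d" and h\<rho>: "hermitian_mat \<rho>" and tr: "trace_mat \<rho> = 1"
    using rho unfolding density_mat_def psd_mat_def by auto
  have d0: "0 < d" by (rule density_mat_dim_pos[OF rho])
  have M2: "2 \<le> M" and xl: "real d / real M ^ 2 < x" using NM_POVMD(1,2)[OF P] by auto
  define p where "p \<alpha> k = Re (trace_mat (E \<alpha> k * \<rho>))" for \<alpha> k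
  define b where "b \<alpha> k = p \<alpha> k - 1 / real M" for \<alpha> k
  define S where "S = (\<Sum>\<alpha><N. \<Sum>k<M. (b \<alpha> k)\<^sup>2)"
  define Y where "Y = povm_lincomb d N M b E"
  have S0: "0 \<le> S" unfolding S_def by (simp add: sum_nonneg)
  define X where "X = \<rho> - complex_of_real (1 / real d) \<cdot>\<^sub>m 1\<^sub>m d"
  have real: "trace_mat (E \<alpha> k * \<rho>) = complex_of_real (p \<alpha> k)" if "\<alpha> < N" "k < M" for \<alpha> k
    unfolding p_def by (rule NM_POVM_prob_real[OF P rho that])
  have b0: "(\<Sum>k<M. b \<alpha> k) = 0" if "\<alpha> < N" for \<alpha>
    using NM_POVM_prob_sum[OF P rho that] M2 by (simp add: b_def p_def sum_subtractf)
  have X: "X \<in> carrier_mat d d" "hermitian_mat X"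
    unfolding X_def using rc hermitian_mat_cnj_index[OF h\<rho> rc]
    by (auto intro!: hermitian_matI[of _ d])
  have EX: "trace_mat (E \<alpha> k * X) = complex_of_real (b \<alpha> k)" if "\<alpha> < N" "k < M" for \<alpha> k
    unfolding X_def trace_mult_minus_scalar_one[OF NM_POVM_carrier[OF P that] rc] real[OF that]
      NM_POVMD(5)[OF P that] b_def using d0 by simp
  have "trace_mat (Y * X) = complex_of_real S"
    unfolding Y_def trace_povm_lincomb_mult[OF P X(1)] S_def of_real_sum
    by (auto simp: EX power2_eq_square intro!: sum.cong)
  then have YX: "cmod (trace_mat (Y * X)) = S" using S0 by simp
  have YY: "Re (trace_mat (Y * Y)) = (x - c) * S"
    using trace_povm_lincomb_square[OF P, of b] b0 unfolding Y_def S_def c_def by simp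
  have "Re (trace_mat (X * X)) = Re (trace_mat (\<rho> * \<rho>)) - 1 / real d"
    unfolding X_def trace_minus_scalar_one_square[OF rc] tr using d0 by (simp add: field_simps)
  then have XX: "Re (trace_mat (X * X)) \<le> 1 - 1 / real d"
    using density_trace_square_le_one[OF rho] by simp
  have xc: "0 < x - c"
    using xl M2 unfolding c_def by (simp add: field_simps power2_eq_square)
  have "(cmod (trace_mat (Y * X)))\<^sup>2 \<le> Re (trace_mat (Y * Y)) * Re (trace_mat (X * X))"
    unfolding Y_def by (rule trace_mult_hermitian_cauchy_schwarz[OF povm_lincomb_carrier povm_lincomb_hermitian[OF P] X])
  then have "S * S \<le> (x - c) * S * Re (trace_mat (X * X))"
    unfolding YX YY by (simp add: power2_eq_square)
  also have "\<dots> \<le> S * ((x - c) * (1 - 1 / real d))"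
    using XX S0 xc by (simp add: mult_left_mono mult.assoc mult.left_commute)
  finally have "S * S \<le> S * ((x - c) * (1 - 1 / real d))" .
  moreover have "0 \<le> (x - c) * (1 - 1 / real d)" using xc d0 by simp
  ultimately have "S \<le> (x - c) * (1 - 1 / real d)"
    using S0 by (cases "S = 0") (simp_all add: mult_le_cancel_left_pos)
  then show ?thesis unfolding S_def b_def p_def .
qed

lemma sum_square_centered:
  fixes p :: "nat \<Rightarrow> real"
  assumes "(\<Sum>k<M. p k) = 1" "0 < M"
  shows "(\<Sum>k<M. (p k)\<^sup>2) = (\<Sum>k<M. (p k - 1 / real M)\<^sup>2) + 1 / real M"
proof -
  have "(\<Sum>k<M. (p k - 1 / real M)\<^sup>2) = (\<Sum>k<M. (p k)\<^sup>2) - 2 / real M * (\<Sum>k<M. p k) + real M * (1 / real M)\<^sup>2"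
    by (simp add: power2_diff sum.distrib sum_subtractf sum_distrib_left sum_divide_distrib mult_ac)
  then show ?thesis using assms by (simp add: power2_eq_square)
qed

lemma K_const_eq:
  assumes M: "2 \<le> M" and d: "0 < d" and IC: "real N * (real M - 1) = real d ^ 2 - 1"
  shows "(x - (real d - real M * x) / (real M * (real M - 1))) * (1 - 1 / real d) + real N / real M
    = K_const d M x"
proof -
  have nz: "real M - 1 \<noteq> 0" "real M \<noteq> 0" "real d \<noteq> 0" using M d by auto
  then have N: "real N = (real d ^ 2 - 1) / (real M - 1)" using IC by (simp add: field_simps)
  have "(x - (real d - real M * x) / (real M * (real M - 1))) * (1 - 1 / real d)
      = (real M ^ 2 * x - real d) * (real d - 1) / (real d * real M * (real M - 1))"
    using nz by (simp add: field_simps power2_eq_square)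
  moreover have "real N / real M = (real d ^ 2 - 1) * real d / (real d * real M * (real M - 1))"
    unfolding N using nz by (simp add: field_simps)
  ultimately have "(x - (real d - real M * x) / (real M * (real M - 1))) * (1 - 1 / real d) + real N / real M
      = ((real M ^ 2 * x - real d) * (real d - 1) + (real d ^ 2 - 1) * real d) / (real d * real M * (real M - 1))"
    by (simp add: add_divide_distrib)
  also have "(real M ^ 2 * x - real d) * (real d - 1) + (real d ^ 2 - 1) * real d
      = (real d - 1) * (real d ^ 2 + real M ^ 2 * x)"
    by (simp add: algebra_simps power2_eq_square)
  finally show ?thesis unfolding K_const_def .
qed

lemma IC_NM_POVM_prob_square_sum_le:
  assumes P: "IC_NM_POVM d N M x E" and rho: "density_mat d \<rho>"
  shows "(\<Sum>\<alpha><N. \<Sum>k<M. (cmod (trace_mat (E \<alpha> k * \<rho>)))\<^sup>2) \<le> K_const d M x"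
proof -
  have NM: "NM_POVM d N M x E" and IC: "N * (M - 1) = d ^ 2 - 1" using P unfolding IC_NM_POVM_def by auto
  have M2: "2 \<le> M" using NM_POVMD(1)[OF NM] .
  have d0: "0 < d" by (rule density_mat_dim_pos[OF rho])
  define p where "p \<alpha> k = Re (trace_mat (E \<alpha> k * \<rho>))" for \<alpha> k
  have "(\<Sum>k<M. (cmod (trace_mat (E \<alpha> k * \<rho>)))\<^sup>2) = (\<Sum>k<M. (p \<alpha> k - 1 / real M)\<^sup>2) + 1 / real M"
    if "\<alpha> < N" for \<alpha>
  proof -
    have "(\<Sum>k<M. (cmod (trace_mat (E \<alpha> k * \<rho>)))\<^sup>2) = (\<Sum>k<M. (p \<alpha> k)\<^sup>2)"
      using NM_POVM_prob_real[OF NM rho that] by (intro sum.cong) (auto simp: p_def, metis norm_of_real power2_abs)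
    then show ?thesis
      using sum_square_centered[of "p \<alpha>" M] NM_POVM_prob_sum[OF NM rho that] M2 unfolding p_def by simp
  qed
  then have "(\<Sum>\<alpha><N. \<Sum>k<M. (cmod (trace_mat (E \<alpha> k * \<rho>)))\<^sup>2)
      = (\<Sum>\<alpha><N. \<Sum>k<M. (p \<alpha> k - 1 / real M)\<^sup>2) + real N / real M"
    by (simp add: sum.distrib)
  also have "\<dots> \<le> (x - (real d - real M * x) / (real M * (real M - 1))) * (1 - 1 / real d) + real N / real M"
    using NM_POVM_centered_prob_bound[OF NM rho] unfolding p_def by simp
  also have "\<dots> = K_const d M x"
    using arg_cong[OF IC, of real] M2 d0 by (intro K_const_eq) simp_all
  finally show ?thesis .
qed

section \<open>Tensor products, partial traces and separable states\<close>

lemma sum_lessThan_mult: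
  fixes f :: "nat \<Rightarrow> 'a :: comm_monoid_add"
  shows "(\<Sum>r<m * n. f r) = (\<Sum>a<m. \<Sum>b<n. f (a * n + b))"
proof -
  have "(\<Sum>r\<in>{a * n..<a * n + n}. f r) = (\<Sum>b<n. f (a * n + b))" for a
    using sum.shift_bounds_nat_ivl[of f 0 "a * n" n] by (simp add: atLeast0LessThan add.commute)
  then show ?thesis unfolding sum.nat_group[symmetric] by simp
qed

lemma mult_add_less_mult:
  fixes i k m n :: nat
  assumes "i < m" "k < n"
  shows "i * n + k < m * n"
proof -
  have "i * n + k < Suc i * n" using assms(2) by simp
  also have "\<dots> \<le> m * n" using assms(1) by (intro mult_le_mono1) simp
  finally show ?thesis .
qed

lemma div_mod_mult2:
  fixes i b c :: nat
  assumes "0 < c"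
  shows "i div (b * c) = i div c div b" "i mod (b * c) div c = i div c mod b" "i mod (b * c) mod c = i mod c"
proof -
  show "i div (b * c) = i div c div b" by (metis div_mult2_eq mult.commute)
  have "i mod (c * b) = c * (i div c mod b) + i mod c" by (rule mod_mult2_eq)
  then show "i mod (b * c) div c = i div c mod b" "i mod (b * c) mod c = i mod c"
    using assms by (simp_all add: mult.commute)
qed

lemma mult_add_div: "k < n \<Longrightarrow> (i * n + k) div n = (i :: nat)"
  by simp

lemma kron_dim [simp]:
  "dim_row (kron A B) = dim_row A * dim_row B" "dim_col (kron A B) = dim_col A * dim_col B"
  unfolding kron_def by simp_all

lemma kron_carrier:
  "A \<in> carrier_mat m1 n1 \<Longrightarrow> B \<in> carrier_mat m2 n2 \<Longrightarrow> kron A B \<in> carrier_mat (m1 * m2) (n1 * n2)"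
  unfolding carrier_mat_def by simp

lemma index_kron_div_mod:
  "i < dim_row A * dim_row B \<Longrightarrow> j < dim_col A * dim_col B \<Longrightarrow>
    kron A B $$ (i, j) = A $$ (i div dim_row B, j div dim_col B) * B $$ (i mod dim_row B, j mod dim_col B)"
  unfolding kron_def by simp

lemma index_kron:
  assumes A: "A \<in> carrier_mat m1 n1" and B: "B \<in> carrier_mat m2 n2"
    and "i < m1" "k < m2" "j < n1" "l < n2"
  shows "kron A B $$ (i * m2 + k, j * n2 + l) = A $$ (i, j) * B $$ (k, l)"
proof -
  have "i * m2 + k < m1 * m2" "j * n2 + l < n1 * n2"
    using assms(3-6) by (simp_all add: mult_add_less_mult)
  then show ?thesis using A B assms(3-6) by (simp add: index_kron_div_mod)
qed

lemma trace_kron_mult: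
  assumes X: "X \<in> carrier_mat m m" and Z: "Z \<in> carrier_mat m m"
    and Y: "Y \<in> carrier_mat n n" and W: "W \<in> carrier_mat n n"
  shows "trace_mat (kron X Y * kron Z W) = trace_mat (X * Z) * trace_mat (Y * W)"
proof -
  have "trace_mat (kron X Y * kron Z W)
      = (\<Sum>a<m. \<Sum>b<n. \<Sum>a'<m. \<Sum>b'<n. (X $$ (a, a') * Z $$ (a', a)) * (Y $$ (b, b') * W $$ (b', b)))"
    unfolding trace_mult_sum[OF kron_carrier[OF X Y] kron_carrier[OF Z W]] sum_lessThan_mult
    by (simp add: index_kron[OF X Y] index_kron[OF Z W] mult_ac)
  also have "\<dots> = (\<Sum>a<m. \<Sum>a'<m. X $$ (a, a') * Z $$ (a', a)) * (\<Sum>b<n. \<Sum>b'<n. Y $$ (b, b') * W $$ (b', b))"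
    by (simp add: sum_product sum.swap[of _ "{..<n}" "{..<m}"])
  also have "\<dots> = trace_mat (X * Z) * trace_mat (Y * W)" unfolding trace_mult_sum[OF X Z] trace_mult_sum[OF Y W] ..
  finally show ?thesis .
qed

lemma trace_kron:
  assumes X: "X \<in> carrier_mat m m" and Y: "Y \<in> carrier_mat n n"
  shows "trace_mat (kron X Y) = trace_mat X * trace_mat Y"
  unfolding trace_mat_def using X Y
  by (simp add: sum_lessThan_mult index_kron[OF X Y] sum_product)

lemma kron_assoc: "kron (kron A B) C = kron A (kron B C)"
proof (rule eq_matI)
  fix i j assume "i < dim_row (kron A (kron B C))" "j < dim_col (kron A (kron B C))"
  then have i: "i < dim_row A * (dim_row B * dim_row C)" and j: "j < dim_col A * (dim_col B * dim_col C)" by simp_all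
  then have "0 < dim_row B * dim_row C" "0 < dim_col B * dim_col C" "0 < dim_row C" "0 < dim_col C"
    by (auto intro: ccontr)
  moreover have "i div dim_row C < dim_row A * dim_row B" "j div dim_col C < dim_col A * dim_col B"
    using i j by (simp_all add: less_mult_imp_div_less mult.assoc)
  ultimately show "kron (kron A B) C $$ (i, j) = kron A (kron B C) $$ (i, j)"
    using i j by (simp add: index_kron_div_mod mult.assoc div_mod_mult2)
qed simp_all

lemma ptrace_mid_kron3:
  assumes A: "A \<in> carrier_mat d1 d1" and B: "B \<in> carrier_mat d2 d2" and C: "C \<in> carrier_mat d3 d3"
  shows "ptrace_mid d1 d2 d3 (kron (kron A B) C) = trace_mat B \<cdot>\<^sub>m kron A C"
proof (rule eq_matI)
  fix i j assume "i < dim_row (trace_mat B \<cdot>\<^sub>m kron A C)" "j < dim_col (trace_mat B \<cdot>\<^sub>m kron A C)"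
  then have i: "i < d1 * d3" and j: "j < d1 * d3" using A C by simp_all
  then have d3: "0 < d3" by (auto intro: ccontr)
  have a: "i div d3 < d1" "j div d3 < d1" and c: "i mod d3 < d3" "j mod d3 < d3"
    using i j d3 by (simp_all add: less_mult_imp_div_less)
  have "ptrace_mid d1 d2 d3 (kron (kron A B) C) $$ (i, j)
      = (\<Sum>k<d2. A $$ (i div d3, j div d3) * B $$ (k, k) * C $$ (i mod d3, j mod d3))"
    unfolding ptrace_mid_def using i j a c
    by (auto simp: index_kron[OF kron_carrier[OF A B] C] index_kron[OF A B] mult_add_less_mult intro!: sum.cong)
  also have "\<dots> = (trace_mat B \<cdot>\<^sub>m kron A C) $$ (i, j)"
    using A B C i j by (simp add: trace_mat_def index_kron_div_mod sum_distrib_left sum_distrib_right mult_ac)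
  finally show "ptrace_mid d1 d2 d3 (kron (kron A B) C) $$ (i, j) = (trace_mat B \<cdot>\<^sub>m kron A C) $$ (i, j)" .
qed (use A C in \<open>simp_all add: ptrace_mid_def\<close>)

lemma ptrace_second_kron:
  assumes X: "X \<in> carrier_mat d1 d1" and Y: "Y \<in> carrier_mat d2 d2"
  shows "ptrace_second d1 d2 (kron X Y) = trace_mat Y \<cdot>\<^sub>m X"
  by (rule eq_matI) (use X Y in \<open>auto simp: ptrace_second_def ptrace_mid_def trace_mat_def index_kron[OF X Y]
      sum_distrib_left mult.commute intro!: sum.cong\<close>)

lemma ptrace_first_kron:
  assumes X: "X \<in> carrier_mat d1 d1" and Y: "Y \<in> carrier_mat d2 d2"
  shows "ptrace_first d1 d2 (kron X Y) = trace_mat X \<cdot>\<^sub>m Y"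
  by (rule eq_matI) (use X Y in \<open>auto simp: ptrace_first_def ptrace_mid_def trace_mat_def index_kron[OF X Y]
      sum_distrib_right intro!: sum.cong\<close>)

definition mixture :: "nat \<Rightarrow> nat \<Rightarrow> (nat \<Rightarrow> real) \<Rightarrow> (nat \<Rightarrow> complex mat) \<Rightarrow> complex mat" where
  "mixture D K p R = mat D D (\<lambda>(r, c). \<Sum>t<K. complex_of_real (p t) * R t $$ (r, c))"

lemma mixture_carrier: "mixture D K p R \<in> carrier_mat D D"
  unfolding mixture_def by simp

lemma mixture_cong: "(\<And>t. t < K \<Longrightarrow> R t = R' t) \<Longrightarrow> mixture D K p R = mixture D K p R'"
  unfolding mixture_def by (rule eq_matI) (auto intro: sum.cong)

lemma trace_mult_mixture:
  assumes X: "X \<in> carrier_mat D D" and R: "\<And>t. t < K \<Longrightarrow> R t \<in> carrier_mat D D"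
  shows "trace_mat (X * mixture D K p R) = (\<Sum>t<K. complex_of_real (p t) * trace_mat (X * R t))"
proof -
  have "trace_mat (X * mixture D K p R) = (\<Sum>i<D. \<Sum>j<D. \<Sum>t<K. complex_of_real (p t) * (X $$ (i, j) * R t $$ (j, i)))"
    unfolding trace_mult_sum[OF X mixture_carrier]
    by (simp add: mixture_def sum_distrib_left mult_ac)
  also have "\<dots> = (\<Sum>t<K. complex_of_real (p t) * trace_mat (X * R t))"
    using trace_mult_sum[OF X R] by (simp add: sum_distrib_left sum.swap[of _ "{..<K}"])
  finally show ?thesis .
qed

lemma ptrace_mid_mixture:
  "ptrace_mid d1 d2 d3 (mixture (d1 * d2 * d3) K p R) = mixture (d1 * d3) K p (\<lambda>t. ptrace_mid d1 d2 d3 (R t))"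
proof (rule eq_matI)
  fix i j assume "i < dim_row (mixture (d1 * d3) K p (\<lambda>t. ptrace_mid d1 d2 d3 (R t)))"
    "j < dim_col (mixture (d1 * d3) K p (\<lambda>t. ptrace_mid d1 d2 d3 (R t)))"
  then have i: "i < d1 * d3" and j: "j < d1 * d3" by (simp_all add: mixture_def)
  then have d3: "0 < d3" by (auto intro: ccontr)
  have "((i div d3) * d2 + k) * d3 + i mod d3 < d1 * d2 * d3" "((j div d3) * d2 + k) * d3 + j mod d3 < d1 * d2 * d3"
    if "k < d2" for k
    using i j d3 that by (simp_all add: mult_add_less_mult less_mult_imp_div_less)
  then show "ptrace_mid d1 d2 d3 (mixture (d1 * d2 * d3) K p R) $$ (i, j)
      = mixture (d1 * d3) K p (\<lambda>t. ptrace_mid d1 d2 d3 (R t)) $$ (i, j)"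
    using i j by (simp add: ptrace_mid_def mixture_def sum_distrib_left sum.swap[of _ "{..<K}"])
qed (simp_all add: ptrace_mid_def mixture_def)

lemma ptrace_mid_product_mixture:
  assumes "\<And>t. t < K \<Longrightarrow> A t \<in> carrier_mat d1 d1 \<and> B t \<in> carrier_mat d2 d2 \<and> C t \<in> carrier_mat d3 d3"
    and "\<And>t. t < K \<Longrightarrow> trace_mat (B t) = 1"
  shows "ptrace_mid d1 d2 d3 (mixture (d1 * d2 * d3) K p (\<lambda>t. kron (kron (A t) (B t)) (C t)))
    = mixture (d1 * d3) K p (\<lambda>t. kron (A t) (C t))"
  unfolding ptrace_mid_mixture using assms by (intro mixture_cong) (simp add: ptrace_mid_kron3)

lemma ptrace_second_product_mixture:
  assumes "\<And>t. t < K \<Longrightarrow> A t \<in> carrier_mat d1 d1 \<and> B t \<in> carrier_mat d2 d2 \<and> trace_mat (B t) = 1"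
  shows "ptrace_second d1 d2 (mixture (d1 * d2) K p (\<lambda>t. kron (A t) (B t))) = mixture d1 K p A"
proof -
  have "ptrace_second d1 d2 (mixture (d1 * d2) K p (\<lambda>t. kron (A t) (B t)))
      = mixture d1 K p (\<lambda>t. ptrace_second d1 d2 (kron (A t) (B t)))"
    using ptrace_mid_mixture[of d1 d2 1 K p "\<lambda>t. kron (A t) (B t)"] by (simp add: ptrace_second_def)
  also have "\<dots> = mixture d1 K p A" using assms by (intro mixture_cong) (simp add: ptrace_second_kron)
  finally show ?thesis .
qed

lemma ptrace_first_product_mixture:
  assumes "\<And>t. t < K \<Longrightarrow> A t \<in> carrier_mat d1 d1 \<and> B t \<in> carrier_mat d2 d2 \<and> trace_mat (A t) = 1"
  shows "ptrace_first d1 d2 (mixture (d1 * d2) K p (\<lambda>t. kron (A t) (B t))) = mixture d2 K p B"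
proof -
  have "ptrace_first d1 d2 (mixture (d1 * d2) K p (\<lambda>t. kron (A t) (B t)))
      = mixture d2 K p (\<lambda>t. ptrace_first d1 d2 (kron (A t) (B t)))"
    using ptrace_mid_mixture[of 1 d1 d2 K p "\<lambda>t. kron (A t) (B t)"] by (simp add: ptrace_first_def)
  also have "\<dots> = mixture d2 K p B" using assms by (intro mixture_cong) (simp add: ptrace_first_kron)
  finally show ?thesis .
qed

lemma fully_separable_mixture:
  assumes "fully_separable dA dB dC \<rho>"
  obtains K :: nat and p :: "nat \<Rightarrow> real" and RA RB RC :: "nat \<Rightarrow> complex mat"
  where "\<And>t. t < K \<Longrightarrow> 0 \<le> p t" "(\<Sum>t<K. p t) = 1"
    "\<forall>t<K. density_mat dA (RA t) \<and> density_mat dB (RB t) \<and> density_mat dC (RC t)"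
    "\<rho> = mixture (dA * dB * dC) K p (\<lambda>t. kron (kron (RA t) (RB t)) (RC t))"
proof -
  obtain K :: nat and p :: "nat \<Rightarrow> real" and RA RB RC :: "nat \<Rightarrow> complex mat" where sep: "\<forall>i<K. 0 \<le> p i" "(\<Sum>i<K. p i) = 1"
    "\<forall>i<K. density_mat dA (RA i) \<and> density_mat dB (RB i) \<and> density_mat dC (RC i)"
    "\<rho> \<in> carrier_mat (dA * dB * dC) (dA * dB * dC)"
    "\<forall>r < dA * dB * dC. \<forall>c < dA * dB * dC.
       \<rho> $$ (r, c) = (\<Sum>i<K. complex_of_real (p i) * kron (kron (RA i) (RB i)) (RC i) $$ (r, c))"
    using assms unfolding fully_separable_def by blast
  have "\<rho> = mixture (dA * dB * dC) K p (\<lambda>t. kron (kron (RA t) (RB t)) (RC t))"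
    using sep(4,5) by (intro eq_matI) (auto simp: mixture_def)
  then show ?thesis using that sep(1-3) by blast
qed

lemma separable_marginals:
  assumes R: "\<forall>t<K. density_mat dA (RA t) \<and> density_mat dB (RB t) \<and> density_mat dC (RC t)"
    and \<rho>: "\<rho> = mixture (dA * dB * dC) K p (\<lambda>t. kron (kron (RA t) (RB t)) (RC t))"
  shows "ptrace_second dA (dB * dC) \<rho> = mixture dA K p RA"
    and "ptrace_second (dA * dB) dC \<rho> = mixture (dA * dB) K p (\<lambda>t. kron (RA t) (RB t))"
    and "ptrace_first dA dB (ptrace_second (dA * dB) dC \<rho>) = mixture dB K p RB"
    and "ptrace_first (dA * dB) dC \<rho> = mixture dC K p RC"
    and "ptrace_first dA (dB * dC) \<rho> = mixture (dB * dC) K p (\<lambda>t. kron (RB t) (RC t))"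
    and "ptrace_mid dA dB dC \<rho> = mixture (dA * dC) K p (\<lambda>t. kron (RA t) (RC t))"
proof -
  have c: "RA t \<in> carrier_mat dA dA" "RB t \<in> carrier_mat dB dB" "RC t \<in> carrier_mat dC dC"
    and tr: "trace_mat (RA t) = 1" "trace_mat (RB t) = 1" "trace_mat (RC t) = 1" if "t < K" for t
    using R that density_mat_carrier density_mat_trace by blast+
  have \<rho>': "\<rho> = mixture (dA * (dB * dC)) K p (\<lambda>t. kron (RA t) (kron (RB t) (RC t)))"
    unfolding \<rho> by (simp add: kron_assoc mult.assoc)
  show "ptrace_second dA (dB * dC) \<rho> = mixture dA K p RA"
    unfolding \<rho>' using c tr by (intro ptrace_second_product_mixture) (simp add: kron_carrier trace_kron[OF c(2,3)])
  show AB: "ptrace_second (dA * dB) dC \<rho> = mixture (dA * dB) K p (\<lambda>t. kron (RA t) (RB t))"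
    unfolding \<rho> using c tr by (intro ptrace_second_product_mixture) (simp add: kron_carrier)
  show "ptrace_first dA dB (ptrace_second (dA * dB) dC \<rho>) = mixture dB K p RB"
    unfolding AB using c tr by (intro ptrace_first_product_mixture) simp
  show "ptrace_first (dA * dB) dC \<rho> = mixture dC K p RC"
    unfolding \<rho> using c tr by (intro ptrace_first_product_mixture) (simp add: kron_carrier trace_kron[OF c(1,2)])
  show "ptrace_first dA (dB * dC) \<rho> = mixture (dB * dC) K p (\<lambda>t. kron (RB t) (RC t))"
    unfolding \<rho>' using c tr by (intro ptrace_first_product_mixture) (simp add: kron_carrier)
  show "ptrace_mid dA dB dC \<rho> = mixture (dA * dC) K p (\<lambda>t. kron (RA t) (RC t))"
    using ptrace_mid_product_mixture[of K RA dA RB dB RC dC p] c tr unfolding \<rho> by simp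
qed

lemma prob3_product_mixture:
  assumes EA: "EA \<alpha> k \<in> carrier_mat dA dA" and EB: "EB \<beta> j \<in> carrier_mat dB dB"
    and EC: "EC \<gamma> n \<in> carrier_mat dC dC"
    and R: "\<And>t. t < K \<Longrightarrow> RA t \<in> carrier_mat dA dA \<and> RB t \<in> carrier_mat dB dB \<and> RC t \<in> carrier_mat dC dC"
  shows "prob3 EA EB EC (mixture (dA * dB * dC) K p (\<lambda>t. kron (kron (RA t) (RB t)) (RC t))) \<alpha> k \<beta> j \<gamma> n
    = (\<Sum>t<K. complex_of_real (p t) *
        (trace_mat (EA \<alpha> k * RA t) * trace_mat (EB \<beta> j * RB t) * trace_mat (EC \<gamma> n * RC t)))"
proof -
  have "trace_mat (kron (kron (EA \<alpha> k) (EB \<beta> j)) (EC \<gamma> n) * kron (kron (RA t) (RB t)) (RC t))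
      = trace_mat (EA \<alpha> k * RA t) * trace_mat (EB \<beta> j * RB t) * trace_mat (EC \<gamma> n * RC t)" if "t < K" for t
    using R[OF that] trace_kron_mult[OF kron_carrier[OF EA EB] kron_carrier[of "RA t" dA dA "RB t" dB dB] EC]
      trace_kron_mult[OF EA _ EB, of "RA t" "RB t"] by simp
  then show ?thesis
    unfolding prob3_def using R
    by (simp add: trace_mult_mixture[OF kron_carrier[OF kron_carrier[OF EA EB] EC]] kron_carrier)
qed

section \<open>Correlation matrices of separable states\<close>

lemma lex_index_bounds2:
  fixes r N M :: nat
  assumes "r < N * M"
  shows "r div M < N" "r mod M < M"
proof -
  have "0 < M" using assms by (cases "M = 0") auto
  then show "r div M < N" "r mod M < M" using assms by (simp_all add: less_mult_imp_div_less)
qed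

lemma lex_index_bounds4:
  fixes c N1 M1 N2 M2 :: nat
  assumes "c < N1 * M1 * N2 * M2"
  shows "c div (M1 * N2 * M2) < N1" "(c div (N2 * M2)) mod M1 < M1" "(c div M2) mod N2 < N2" "c mod M2 < M2"
proof -
  have "0 < M1" "0 < N2" "0 < M2" using assms by (cases "M1 = 0 \<or> N2 = 0 \<or> M2 = 0"; auto)+
  then show "c div (M1 * N2 * M2) < N1" "(c div (N2 * M2)) mod M1 < M1" "(c div M2) mod N2 < N2" "c mod M2 < M2"
    using assms by (simp_all add: less_mult_imp_div_less mult.assoc)
qed

lemma index_tau_vec_mixture:
  assumes E: "\<And>\<alpha> k. \<alpha> < N \<Longrightarrow> k < M \<Longrightarrow> E \<alpha> k \<in> carrier_mat d d"
    and R: "\<And>t. t < K \<Longrightarrow> R t \<in> carrier_mat d d" and r: "r < N * M"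
  shows "tau_vec N M E (mixture d K p R) $ r = (\<Sum>t<K. complex_of_real (p t) * tau_vec N M E (R t) $ r)"
  using lex_index_bounds2[OF r] r unfolding tau_vec_def by (simp add: trace_mult_mixture[OF E R])

lemma index_sigma_vec_mixture:
  assumes E1: "\<And>\<alpha> k. \<alpha> < N1 \<Longrightarrow> k < M1 \<Longrightarrow> E1 \<alpha> k \<in> carrier_mat d1 d1"
    and E2: "\<And>\<alpha> k. \<alpha> < N2 \<Longrightarrow> k < M2 \<Longrightarrow> E2 \<alpha> k \<in> carrier_mat d2 d2"
    and R: "\<And>t. t < K \<Longrightarrow> R t \<in> carrier_mat (d1 * d2) (d1 * d2)" and c: "c < N1 * M1 * N2 * M2"
  shows "sigma_vec N1 M1 E1 N2 M2 E2 (mixture (d1 * d2) K p R) $ c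
    = (\<Sum>t<K. complex_of_real (p t) * sigma_vec N1 M1 E1 N2 M2 E2 (R t) $ c)"
  using lex_index_bounds4[OF c] c unfolding sigma_vec_def
  by (simp add: Let_def trace_mult_mixture[OF kron_carrier[OF E1 E2] R])

lemma index_sigma_vec_kron:
  assumes E1: "\<And>\<alpha> k. \<alpha> < N1 \<Longrightarrow> k < M1 \<Longrightarrow> E1 \<alpha> k \<in> carrier_mat d1 d1"
    and E2: "\<And>\<alpha> k. \<alpha> < N2 \<Longrightarrow> k < M2 \<Longrightarrow> E2 \<alpha> k \<in> carrier_mat d2 d2"
    and R1: "R1 \<in> carrier_mat d1 d1" and R2: "R2 \<in> carrier_mat d2 d2" and c: "c < N1 * M1 * N2 * M2"
  shows "sigma_vec N1 M1 E1 N2 M2 E2 (kron R1 R2) $ c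
    = tau_vec N1 M1 E1 R1 $ (c div (N2 * M2)) * tau_vec N2 M2 E2 R2 $ (c mod (N2 * M2))"
proof -
  have pos: "0 < M1" "0 < N2" "0 < M2" using c by (cases "M1 = 0 \<or> N2 = 0 \<or> M2 = 0"; auto)+
  have c1: "c div (N2 * M2) < N1 * M1" using c by (simp add: less_mult_imp_div_less mult.assoc)
  have "c div (N2 * M2) div M1 = c div (N2 * M2 * M1)" by (rule div_mult2_eq[symmetric])
  moreover have "N2 * M2 * M1 = M1 * N2 * M2" by (simp add: mult_ac)
  ultimately have idx: "c div (N2 * M2) div M1 = c div (M1 * N2 * M2)" "c mod (N2 * M2) div M2 = c div M2 mod N2"
    "c mod (N2 * M2) mod M2 = c mod M2"
    using div_mod_mult2(2,3)[OF pos(3), of c N2] by simp_all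
  show ?thesis
    unfolding sigma_vec_def tau_vec_def using lex_index_bounds4[OF c] c c1 pos idx
    by (simp add: Let_def trace_kron_mult[OF E1 R1 E2 R2])
qed

lemma tau_vec_norm_le:
  assumes P: "IC_NM_POVM d N M x E" and R: "density_mat d R"
  shows "(\<Sum>r<N * M. (cmod (tau_vec N M E R $ r))\<^sup>2) \<le> K_const d M x"
proof -
  have "(\<Sum>r<N * M. (cmod (tau_vec N M E R $ r))\<^sup>2) = (\<Sum>\<alpha><N. \<Sum>k<M. (cmod (trace_mat (E \<alpha> k * R)))\<^sup>2)"
    unfolding sum_lessThan_mult by (auto simp: tau_vec_def mult_add_less_mult intro!: sum.cong)
  also have "\<dots> \<le> K_const d M x" by (rule IC_NM_POVM_prob_square_sum_le[OF P R])
  finally show ?thesis .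
qed

lemma K_const_nonneg: "IC_NM_POVM d N M x E \<Longrightarrow> density_mat d R \<Longrightarrow> 0 \<le> K_const d M x"
  using tau_vec_norm_le by (meson order_trans sum_nonneg zero_le_power2)

lemma sigma_vec_kron_norm_le:
  assumes P1: "IC_NM_POVM d1 N1 M1 x1 E1" and R1: "density_mat d1 R1"
    and P2: "IC_NM_POVM d2 N2 M2 x2 E2" and R2: "density_mat d2 R2"
  shows "(\<Sum>c<N1 * M1 * N2 * M2. (cmod (sigma_vec N1 M1 E1 N2 M2 E2 (kron R1 R2) $ c))\<^sup>2)
    \<le> K_const d1 M1 x1 * K_const d2 M2 x2"
proof -
  have R: "R1 \<in> carrier_mat d1 d1" "R2 \<in> carrier_mat d2 d2"
    using density_mat_carrier[OF R1] density_mat_carrier[OF R2] .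
  note E = IC_NM_POVM_carrier[OF P1] IC_NM_POVM_carrier[OF P2]
  have "(\<Sum>c<N1 * M1 * N2 * M2. (cmod (sigma_vec N1 M1 E1 N2 M2 E2 (kron R1 R2) $ c))\<^sup>2)
      = (\<Sum>r<N1 * M1. \<Sum>s<N2 * M2. (cmod (tau_vec N1 M1 E1 R1 $ r))\<^sup>2 * (cmod (tau_vec N2 M2 E2 R2 $ s))\<^sup>2)"
  proof -
    have "(cmod (sigma_vec N1 M1 E1 N2 M2 E2 (kron R1 R2) $ (r * (N2 * M2) + s)))\<^sup>2
        = (cmod (tau_vec N1 M1 E1 R1 $ r))\<^sup>2 * (cmod (tau_vec N2 M2 E2 R2 $ s))\<^sup>2"
      if "r < N1 * M1" "s < N2 * M2" for r s
    proof -
      have "(r * (N2 * M2) + s) div (N2 * M2) = r" using mult_add_div[OF that(2)] .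
      then show ?thesis
      using index_sigma_vec_kron[of N1 M1 E1 d1 N2 M2 E2 d2 R1 R2 "r * (N2 * M2) + s", OF E R]
        mult_add_less_mult[OF that] that(2) \<open>(r * (N2 * M2) + s) div (N2 * M2) = r\<close>
      by (simp add: norm_mult power_mult_distrib mult.assoc)
    qed
    then show ?thesis
      unfolding mult.assoc[of "N1 * M1"] sum_lessThan_mult[of _ "N1 * M1" "N2 * M2"] by simp
  qed
  also have "\<dots> = (\<Sum>r<N1 * M1. (cmod (tau_vec N1 M1 E1 R1 $ r))\<^sup>2) * (\<Sum>s<N2 * M2. (cmod (tau_vec N2 M2 E2 R2 $ s))\<^sup>2)"
    by (simp add: sum_product)
  also have "\<dots> \<le> K_const d1 M1 x1 * K_const d2 M2 x2"
    using tau_vec_norm_le[OF P1 R1] tau_vec_norm_le[OF P2 R2] K_const_nonneg[OF P1 R1]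
    by (intro mult_mono) (auto intro: sum_nonneg)
  finally show ?thesis .
qed

lemma index_corr_mat:
  "r < N1 * M1 \<Longrightarrow> c < N2 * M2 * N3 * M3 \<Longrightarrow> corr_mat N1 M1 N2 M2 N3 M3 f $$ (r, c) =
    f (r div M1) (r mod M1) (c div (M2 * N3 * M3)) ((c div (N3 * M3)) mod M2) ((c div M3) mod N3) (c mod M3)"
  unfolding corr_mat_def by simp

lemma script_M_carrier:
  "dim_vec \<tau> = n1 \<Longrightarrow> dim_vec \<sigma> = n2 \<Longrightarrow> P \<in> carrier_mat n1 n2 \<Longrightarrow>
    script_M l \<mu> \<nu> \<tau> \<sigma> P \<in> carrier_mat (l + n1) (l + n2)"
  unfolding script_M_def carrier_mat_def ones_mat_def omega_def by simp

lemma index_script_M: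
  assumes "dim_vec \<tau> = n1" "dim_vec \<sigma> = n2" "P \<in> carrier_mat n1 n2" "r < l + n1" "c < l + n2"
  shows "script_M l \<mu> \<nu> \<tau> \<sigma> P $$ (r, c) =
    (if r < l then if c < l then complex_of_real (\<mu> * \<nu>) else complex_of_real \<mu> * \<sigma> $ (c - l)
     else if c < l then complex_of_real \<nu> * \<tau> $ (r - l) else P $$ (r - l, c - l))"
  using assms unfolding script_M_def ones_mat_def omega_def by simp

lemma sum_lessThan_add:
  fixes f :: "nat \<Rightarrow> 'a :: comm_monoid_add"
  shows "(\<Sum>r<a + b. f r) = (\<Sum>r<a. f r) + (\<Sum>r<b. f (a + r))"
  by (induction b) (simp_all add: add.assoc)

definition prepend_const :: "nat \<Rightarrow> complex \<Rightarrow> (nat \<Rightarrow> complex) \<Rightarrow> nat \<Rightarrow> complex" where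
  "prepend_const l z a r = (if r < l then z else a (r - l))"

lemma sum_cmod_square_prepend_const:
  "(\<Sum>r<l + n. (cmod (prepend_const l z a r))\<^sup>2) = real l * (cmod z)\<^sup>2 + (\<Sum>r<n. (cmod (a r))\<^sup>2)"
  by (simp add: prepend_const_def sum_lessThan_add)

(* For a product state script_M is the rank-one matrix (mu, ..., mu, tau) (nu, ..., nu, sigma)^T, so
   for a mixture it is the corresponding mixture of rank-one matrices. *)
lemma index_script_M_mixture:
  fixes p :: "nat \<Rightarrow> real" and a b :: "nat \<Rightarrow> nat \<Rightarrow> complex"
  assumes \<tau>: "dim_vec \<tau> = n1" and \<sigma>: "dim_vec \<sigma> = n2" and P: "P \<in> carrier_mat n1 n2"
    and p: "(\<Sum>t<K. p t) = 1"
    and \<tau>_eq: "\<And>r. r < n1 \<Longrightarrow> \<tau> $ r = (\<Sum>t<K. complex_of_real (p t) * a t r)"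
    and \<sigma>_eq: "\<And>c. c < n2 \<Longrightarrow> \<sigma> $ c = (\<Sum>t<K. complex_of_real (p t) * b t c)"
    and P_eq: "\<And>r c. r < n1 \<Longrightarrow> c < n2 \<Longrightarrow> P $$ (r, c) = (\<Sum>t<K. complex_of_real (p t) * (a t r * b t c))"
    and rc: "r < l + n1" "c < l + n2"
  shows "script_M l \<mu> \<nu> \<tau> \<sigma> P $$ (r, c) = (\<Sum>t<K. complex_of_real (p t) *
    (prepend_const l (complex_of_real \<mu>) (a t) r * prepend_const l (complex_of_real \<nu>) (b t) c))"
proof -
  have p1: "(\<Sum>t<K. complex_of_real (p t)) = 1" using p by (simp flip: of_real_sum)
  have "(\<Sum>t<K. complex_of_real (p t) *
      (prepend_const l (complex_of_real \<mu>) (a t) r * prepend_const l (complex_of_real \<nu>) (b t) c)) =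
    (if r < l then if c < l then complex_of_real (\<mu> * \<nu>) else complex_of_real \<mu> * \<sigma> $ (c - l)
     else if c < l then complex_of_real \<nu> * \<tau> $ (r - l) else P $$ (r - l, c - l))"
  proof (cases "r < l"; cases "c < l")
    assume "r < l" "c < l"
    then show ?thesis using p1 by (simp add: prepend_const_def sum_distrib_right[symmetric])
  next
    assume "r < l" "\<not> c < l"
    then show ?thesis using \<sigma>_eq[of "c - l"] rc by (simp add: prepend_const_def sum_distrib_left mult_ac)
  next
    assume "\<not> r < l" "c < l"
    then show ?thesis using \<tau>_eq[of "r - l"] rc by (simp add: prepend_const_def sum_distrib_left mult_ac)
  next
    assume "\<not> r < l" "\<not> c < l"
    then show ?thesis using P_eq[of "r - l" "c - l"] rc by (simp add: prepend_const_def)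
  qed
  then show ?thesis unfolding index_script_M[OF \<tau> \<sigma> P rc] by simp
qed

lemma trace_norm_script_M_mixture_le:
  fixes K :: nat and p :: "nat \<Rightarrow> real" and a b :: "nat \<Rightarrow> nat \<Rightarrow> complex"
  assumes \<tau>: "dim_vec \<tau> = n1" and \<sigma>: "dim_vec \<sigma> = n2" and P: "P \<in> carrier_mat n1 n2"
    and p: "\<And>t. t < K \<Longrightarrow> 0 \<le> p t" "(\<Sum>t<K. p t) = 1"
    and \<tau>_eq: "\<And>r. r < n1 \<Longrightarrow> \<tau> $ r = (\<Sum>t<K. complex_of_real (p t) * a t r)"
    and \<sigma>_eq: "\<And>c. c < n2 \<Longrightarrow> \<sigma> $ c = (\<Sum>t<K. complex_of_real (p t) * b t c)"
    and P_eq: "\<And>r c. r < n1 \<Longrightarrow> c < n2 \<Longrightarrow> P $$ (r, c) = (\<Sum>t<K. complex_of_real (p t) * (a t r * b t c))"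
    and a: "\<And>t. t < K \<Longrightarrow> (\<Sum>r<n1. (cmod (a t r))\<^sup>2) \<le> KX"
    and b: "\<And>t. t < K \<Longrightarrow> (\<Sum>c<n2. (cmod (b t c))\<^sup>2) \<le> KY"
  shows "trace_norm (script_M l \<mu> \<nu> \<tau> \<sigma> P) \<le> sqrt ((real l * \<mu>\<^sup>2 + KX) * (real l * \<nu>\<^sup>2 + KY))"
proof -
  define a' where "a' t = prepend_const l (complex_of_real \<mu>) (a t)" for t
  define b' where "b' t = prepend_const l (complex_of_real \<nu>) (b t)" for t
  have "0 < K" using p(2) by (cases K) auto
  then have KX: "0 \<le> KX" using a[of 0] sum_nonneg[of "{..<n1}" "\<lambda>r. (cmod (a 0 r))\<^sup>2"] by simp
  have "trace_norm (script_M l \<mu> \<nu> \<tau> \<sigma> P)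
      \<le> (\<Sum>t<K. p t * (sqrt (\<Sum>r<l + n1. (cmod (a' t r))\<^sup>2) * sqrt (\<Sum>c<l + n2. (cmod (b' t c))\<^sup>2)))"
    unfolding a'_def b'_def
    by (rule trace_norm_rank_one_mixture[OF script_M_carrier[OF \<tau> \<sigma> P]])
      (simp_all add: p(1) index_script_M_mixture[OF \<tau> \<sigma> P p(2) \<tau>_eq \<sigma>_eq P_eq])
  also have "\<dots> \<le> (\<Sum>t<K. p t * (sqrt (real l * \<mu>\<^sup>2 + KX) * sqrt (real l * \<nu>\<^sup>2 + KY)))"
    using p(1) a b KX
    by (intro sum_mono mult_left_mono mult_mono)
      (auto simp: a'_def b'_def sum_cmod_square_prepend_const intro!: add_nonneg_nonneg sum_nonneg)
  also have "\<dots> = sqrt ((real l * \<mu>\<^sup>2 + KX) * (real l * \<nu>\<^sup>2 + KY))"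
    unfolding sum_distrib_right[symmetric] p(2) by (simp add: real_sqrt_mult)
  finally show ?thesis .
qed

lemma trace_norm_script_M_separable_le:
  fixes p :: "nat \<Rightarrow> real"
  assumes P1: "IC_NM_POVM d1 N1 M1 x1 E1" and P2: "IC_NM_POVM d2 N2 M2 x2 E2"
    and P3: "IC_NM_POVM d3 N3 M3 x3 E3"
    and p: "\<And>t. t < K \<Longrightarrow> 0 \<le> p t" "(\<Sum>t<K. p t) = 1"
    and R: "\<And>t. t < K \<Longrightarrow> density_mat d1 (R1 t) \<and> density_mat d2 (R2 t) \<and> density_mat d3 (R3 t)"
    and f: "\<And>\<alpha> k \<beta> j \<gamma> n. \<alpha> < N1 \<Longrightarrow> k < M1 \<Longrightarrow> \<beta> < N2 \<Longrightarrow> j < M2 \<Longrightarrow> \<gamma> < N3 \<Longrightarrow> n < M3 \<Longrightarrow>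
      f \<alpha> k \<beta> j \<gamma> n = (\<Sum>t<K. complex_of_real (p t) *
        (trace_mat (E1 \<alpha> k * R1 t) * (trace_mat (E2 \<beta> j * R2 t) * trace_mat (E3 \<gamma> n * R3 t))))"
  shows "trace_norm (script_M l \<mu> \<nu> (tau_vec N1 M1 E1 (mixture d1 K p R1))
      (sigma_vec N2 M2 E2 N3 M3 E3 (mixture (d2 * d3) K p (\<lambda>t. kron (R2 t) (R3 t))))
      (corr_mat N1 M1 N2 M2 N3 M3 f))
    \<le> sqrt ((real l * \<mu>\<^sup>2 + K_const d1 M1 x1) * (real l * \<nu>\<^sup>2 + K_const d2 M2 x2 * K_const d3 M3 x3))"
proof (rule trace_norm_script_M_mixture_le[OF _ _ _ p])
  note E1 = IC_NM_POVM_carrier[OF P1]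
  note E2 = IC_NM_POVM_carrier[OF P2]
  note E3 = IC_NM_POVM_carrier[OF P3]
  have R1: "R1 t \<in> carrier_mat d1 d1" and R2: "R2 t \<in> carrier_mat d2 d2" and R3: "R3 t \<in> carrier_mat d3 d3"
    if "t < K" for t
    using R[OF that] density_mat_carrier by blast+
  show "dim_vec (tau_vec N1 M1 E1 (mixture d1 K p R1)) = N1 * M1" by (simp add: tau_vec_def)
  show "dim_vec (sigma_vec N2 M2 E2 N3 M3 E3 (mixture (d2 * d3) K p (\<lambda>t. kron (R2 t) (R3 t)))) = N2 * M2 * N3 * M3"
    by (simp add: sigma_vec_def)
  show "corr_mat N1 M1 N2 M2 N3 M3 f \<in> carrier_mat (N1 * M1) (N2 * M2 * N3 * M3)"
    by (simp add: corr_mat_def)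
  show "tau_vec N1 M1 E1 (mixture d1 K p R1) $ r
      = (\<Sum>t<K. complex_of_real (p t) * tau_vec N1 M1 E1 (R1 t) $ r)" if "r < N1 * M1" for r
    by (rule index_tau_vec_mixture[of N1 M1 E1 d1 K R1, OF E1 R1 that])
  show "sigma_vec N2 M2 E2 N3 M3 E3 (mixture (d2 * d3) K p (\<lambda>t. kron (R2 t) (R3 t))) $ c
      = (\<Sum>t<K. complex_of_real (p t) * sigma_vec N2 M2 E2 N3 M3 E3 (kron (R2 t) (R3 t)) $ c)"
    if "c < N2 * M2 * N3 * M3" for c
    by (rule index_sigma_vec_mixture[of N2 M2 E2 d2 N3 M3 E3 d3 K, OF E2 E3 kron_carrier[OF R2 R3] that])
  show "corr_mat N1 M1 N2 M2 N3 M3 f $$ (r, c) = (\<Sum>t<K. complex_of_real (p t) *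
      (tau_vec N1 M1 E1 (R1 t) $ r * sigma_vec N2 M2 E2 N3 M3 E3 (kron (R2 t) (R3 t)) $ c))"
    if "r < N1 * M1" "c < N2 * M2 * N3 * M3" for r c
    using that lex_index_bounds2[OF that(1)] lex_index_bounds4[OF that(2)]
    unfolding index_corr_mat[OF that] tau_vec_def sigma_vec_def
    by (simp add: Let_def f trace_kron_mult[OF E2 R2 E3 R3])
  show "(\<Sum>r<N1 * M1. (cmod (tau_vec N1 M1 E1 (R1 t) $ r))\<^sup>2) \<le> K_const d1 M1 x1" if "t < K" for t
    using tau_vec_norm_le[OF P1] R[OF that] by blast
  show "(\<Sum>c<N2 * M2 * N3 * M3. (cmod (sigma_vec N2 M2 E2 N3 M3 E3 (kron (R2 t) (R3 t)) $ c))\<^sup>2)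
      \<le> K_const d2 M2 x2 * K_const d3 M3 x3" if "t < K" for t
    using sigma_vec_kron_norm_le[OF P2 _ P3] R[OF that] by blast
qed

theorem theorem2:
  fixes dA dB dC NA NB NC MA MB MC l :: nat
    and xA xB xC \<mu> \<nu> :: real
    and EA EB EC :: "nat \<Rightarrow> nat \<Rightarrow> complex mat"
    and \<rho> :: "complex mat"
  defines "KA \<equiv> K_const dA MA xA"
      and "KB \<equiv> K_const dB MB xB"
      and "KC \<equiv> K_const dC MC xC"
      and "\<rho>A \<equiv> ptrace_second dA (dB * dC) \<rho>"
      and "\<rho>B \<equiv> ptrace_first dA dB (ptrace_second (dA * dB) dC \<rho>)"
      and "\<rho>C \<equiv> ptrace_first (dA * dB) dC \<rho>"
      and "\<rho>BC \<equiv> ptrace_first dA (dB * dC) \<rho>"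
      and "\<rho>AC \<equiv> ptrace_mid dA dB dC \<rho>"
      and "\<rho>AB \<equiv> ptrace_second (dA * dB) dC \<rho>"
  assumes state: "density_mat (dA * dB * dC) \<rho>"
      and povmA: "IC_NM_POVM dA NA MA xA EA"
      and povmB: "IC_NM_POVM dB NB MB xB EB"
      and povmC: "IC_NM_POVM dC NC MC xC EC"
      and l_pos: "0 < l"
      and sep: "fully_separable dA dB dC \<rho>"
  shows "trace_norm (script_M l \<mu> \<nu> (tau_vec NA MA EA \<rho>A) (sigma_vec NB MB EB NC MC EC \<rho>BC)
            (P_A_BC NA MA EA NB MB EB NC MC EC \<rho>))
           \<le> sqrt ((real l * \<mu>\<^sup>2 + KA) * (real l * \<nu>\<^sup>2 + KB * KC))
       \<and> trace_norm (script_M l \<mu> \<nu> (tau_vec NB MB EB \<rho>B) (sigma_vec NA MA EA NC MC EC \<rho>AC)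
            (P_B_AC NA MA EA NB MB EB NC MC EC \<rho>))
           \<le> sqrt ((real l * \<mu>\<^sup>2 + KB) * (real l * \<nu>\<^sup>2 + KA * KC))
       \<and> trace_norm (script_M l \<mu> \<nu> (tau_vec NC MC EC \<rho>C) (sigma_vec NA MA EA NB MB EB \<rho>AB)
            (P_C_AB NA MA EA NB MB EB NC MC EC \<rho>))
           \<le> sqrt ((real l * \<mu>\<^sup>2 + KC) * (real l * \<nu>\<^sup>2 + KA * KB))"
proof -
  obtain K p RA RB RC where p: "\<And>t. t < K \<Longrightarrow> 0 \<le> p t" "(\<Sum>t<K. p t) = 1"
    and R: "\<forall>t<K. density_mat dA (RA t) \<and> density_mat dB (RB t) \<and> density_mat dC (RC t)"
    and \<rho>: "\<rho> = mixture (dA * dB * dC) K p (\<lambda>t. kron (kron (RA t) (RB t)) (RC t))"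
    using fully_separable_mixture[OF sep] by blast
  have prob: "prob3 EA EB EC \<rho> \<alpha> k \<beta> j \<gamma> n = (\<Sum>t<K. complex_of_real (p t) *
      (trace_mat (EA \<alpha> k * RA t) * trace_mat (EB \<beta> j * RB t) * trace_mat (EC \<gamma> n * RC t)))"
    if "\<alpha> < NA" "k < MA" "\<beta> < NB" "j < MB" "\<gamma> < NC" "n < MC" for \<alpha> k \<beta> j \<gamma> n
    unfolding \<rho> using that R density_mat_carrier
      IC_NM_POVM_carrier[OF povmA]
      IC_NM_POVM_carrier[OF povmB]
      IC_NM_POVM_carrier[OF povmC]
    by (intro prob3_product_mixture) blast+
  note marginals = separable_marginals[OF R \<rho>]
  show ?thesis
    unfolding KA_def KB_def KC_def \<rho>A_def \<rho>B_def \<rho>C_def \<rho>BC_def \<rho>AC_def \<rho>AB_def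
      P_A_BC_def P_B_AC_def P_C_AB_def marginals(3)
    \<comment> \<open>rho_B is a partial trace of rho_AB, so its equation has to be used first\<close>
    unfolding marginals
    using R prob
    by (intro conjI trace_norm_script_M_separable_le[OF povmA povmB povmC p]
        trace_norm_script_M_separable_le[OF povmB povmA povmC p]
        trace_norm_script_M_separable_le[OF povmC povmA povmB p]) (auto simp: mult_ac)
qed

end
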